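(* Suppose Assumption D holds, let $x$ be an allocation rule satisfying Assumption X, let $K\ge0$, and let $\mathcal{T}$ be the class of $K$-limited premium transfers. For each $i$ let $\theta_i^K:=\sup\{\theta\in\Theta:\int_{\underline\theta}^{\theta}X_i^{\min}(z)\,dz\le K\}$ and define $t_i^w,t_i^l:\Theta\to\mathbb{R}$ by $$(t_i^w(\theta),t_i^l(\theta))=\Big(\theta-\int_{\underline\theta}^{\theta}X_i^{\min}(z)dz,\ -\int_{\underline\theta}^{\theta}X_i^{\min}(z)dz\Big)\quad\text{if }\theta\le\theta_i^K,$$ $$(t_i^w(\theta),t_i^l(\theta))=\Big(\theta-K-\tfrac{1}{X_i^{\min}(\theta)}\Big(\int_{\underline\theta}^{\theta}X_i^{\min}(z)dz-K\Big),\ -K\Big)\quad\text{if }\theta>\theta_i^K,$$ and $t_i^*(\theta,\theta'):=t_i^w(\theta)x_i(\theta,\theta')+t_i^l(\theta)[1-x_i(\theta,\theta')]$. Then $t^*$ is the unique solution to the Reduced Problem (R), and hence a solution to the Optimal Transfer Problem (P), where: (P) is to maximize $\sum_i\int_\Theta T_i(\theta)dP(\theta)$ over transfer rules $t$ with $(x,t)$ feasible and $t\in\mathcal{T}$; (R) is to maximize the same objective over transfer rules $t$ that are win-lose dependent, satisfy $U_i^{\min}(\theta)=\int_{\underline\theta}^{\theta}X_i^{\min}(z)dz$ for all $i,\theta$, and $t\in\mathcal{T}$.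
   Context: $\Theta=[\underline\theta,\bar\theta]$ with $0<\underline\theta<\bar\theta$, Borel $\sigma$-algebra $\mathcal{B}$; "$\sigma$-algebra" means sub-$\sigma$-algebra of $\mathcal{B}$; $\Delta(\Theta,\mathcal{A})$ is the set of probability measures on $(\Theta,\mathcal{A})$; $P_{\mathcal{E}}$ is the restriction of $P$ to $\mathcal{E}$. A divergence $D$ assigns to each pair $Q,P$ of probability measures on a common $\sigma$-algebra a value $D(Q\|P)\in[0,\infty]$. Assumption D: for every $\sigma$-algebra $\mathcal{A}$, $P,Q\in\Delta(\Theta,\mathcal{A})$: (D1) $D(Q\|P)=0$ if $Q=P$; (D2) if $Q\ll P$ with bounded $dQ/dP$, $\epsilon\mapsto D(\epsilon Q+(1-\epsilon)P\|P)$ is continuous on $[0,1]$; (D3) $D(Q\|P)<\infty\Rightarrow Q\ll P$; (D4) $D(Q_{\mathcal{E}}\|P_{\mathcal{E}})\le D(Q\|P)$ for sub-$\sigma$-algebras $\mathcal{E}\subset\mathcal{A}$; (D5) equality in (D4) when $dQ_{\mathcal{E}}/dP_{\mathcal{E}}=dQ/dP$ $P$-a.e. Fix atomless $P\in\Delta(\Theta,\mathcal{B})$, $\eta>0$; "a.e." is w.r.t. $P$ or $P\otimes P$. Two bidders $i\in\{1,2\}$. An allocation rule is bounded measurable $x=(x_1,x_2):\Theta^2\to\mathbb{R}^2$ with $x_1(\theta,\theta')\ge0$, $x_2(\theta',\theta)\ge0$, $x_1(\theta,\theta')+x_2(\theta',\theta)\le1$; a transfer rule is bounded measurable $t=(t_1,t_2):\Theta^2\to\mathbb{R}^2$.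 $X_i(\theta)=\int x_i(\theta,\theta')dP(\theta')$, $X_i^{\min}(\theta)=\inf_Q\{\int x_i(\theta,\theta')dQ(\theta'):D(Q\|P)\le\eta\}$, $U_i^{\min}(\theta)=\inf_Q\{\int[\theta x_i(\theta,\theta')-t_i(\theta,\theta')]dQ(\theta'):D(Q\|P)\le\eta\}$, $T_i(\theta)=\int t_i(\theta,\theta')dP(\theta')$, $Q$ over $\Delta(\Theta,\mathcal{B})$. $(x,t)$ is incentive compatible if for all $i,\theta$, $\theta\in\arg\max_{\hat\theta}\inf_Q\{\int[\theta x_i(\hat\theta,\theta')-t_i(\hat\theta,\theta')]dQ(\theta'):D(Q\|P)\le\eta\}$; individually rational if $U_i^{\min}\ge0$; feasible if both. Assumption X: (i) $x_i(\theta,\theta')\in\{0,1\}$ for $\theta'\ne\theta$; (ii) $X_i(\theta)=1\Rightarrow\theta=\bar\theta$; (iii) $X_i^{\min}$ non-decreasing. $t$ is a $K$-limited premium transfer if for every $i$, every $\theta<\bar\theta$ and all $\theta^w,\theta^l$ with $x_i(\theta,\theta^w)=1$ and $x_i(\theta,\theta^l)=0$, $-t_i(\theta,\theta^l)\le K$. $t$ is win-lose dependent if there exist $t_i^w,t_i^l:\Theta\to\mathbb{R}$ with $t_i(\theta,\theta')=t_i^w(\theta)x_i(\theta,\theta')+t_i^l(\theta)[1-x_i(\theta,\theta')]$ and $\theta-t_i^w(\theta)\ge-t_i^l(\theta)$ for all $i,\theta,\theta'$. *)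

theory Defs
  imports "HOL-Analysis.Analysis" "HOL-Probability.Probability"
begin

(* Type space Theta = [lo, hi]; bidders are indexed by i \<in> {1,2} (i :: nat).
   x i th th' : allocation to bidder i when i's type is th and the opponent's type is th'.
   t i th th' : transfer of bidder i, same convention. *)

definition BTheta :: "real \<Rightarrow> real \<Rightarrow> real measure" where
  "BTheta lo hi = restrict_space borel {lo..hi}"

definition is_salg :: "real \<Rightarrow> real \<Rightarrow> real set set \<Rightarrow> bool" where
  "is_salg lo hi A \<longleftrightarrow> sigma_algebra {lo..hi} A \<and> A \<subseteq> sets (BTheta lo hi)"

definition Delta :: "real \<Rightarrow> real \<Rightarrow> real set set \<Rightarrow> real measure \<Rightarrow> bool" where
  "Delta lo hi A M \<longleftrightarrow> prob_space M \<and> space M = {lo..hi} \<and> sets M = A"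

definition mix :: "real \<Rightarrow> real measure \<Rightarrow> real measure \<Rightarrow> real measure" where
  "mix e Q P = measure_of (space P) (sets P)
      (\<lambda>S. ennreal e * emeasure Q S + ennreal (1 - e) * emeasure P S)"

definition restr :: "real measure \<Rightarrow> real set set \<Rightarrow> real measure" where
  "restr M E = measure_of (space M) E (emeasure M)"

(* Assumption D; D Q P stands for D(Q || P) *)
definition assumption_D ::
  "real \<Rightarrow> real \<Rightarrow> (real measure \<Rightarrow> real measure \<Rightarrow> ennreal) \<Rightarrow> bool" where
  "assumption_D lo hi D \<longleftrightarrow>
    (\<forall>A P Q. is_salg lo hi A \<longrightarrow> Delta lo hi A P \<longrightarrow> Delta lo hi A Q \<longrightarrow>
       (Q = P \<longrightarrow> D Q P = 0) \<and>
       (absolutely_continuous P Q \<and> (\<exists>c::real. AE z in P. RN_deriv P Q z \<le> ennreal c)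
          \<longrightarrow> continuous_on {0..1} (\<lambda>e. D (mix e Q P) P)) \<and>
       (D Q P < \<infinity> \<longrightarrow> absolutely_continuous P Q) \<and>
       (\<forall>E. is_salg lo hi E \<and> E \<subseteq> A \<longrightarrow>
          D (restr Q E) (restr P E) \<le> D Q P \<and>
          (absolutely_continuous P Q \<and>
           (AE z in P. RN_deriv (restr P E) (restr Q E) z = RN_deriv P Q z)
             \<longrightarrow> D (restr Q E) (restr P E) = D Q P)))"

definition Qset ::
  "real \<Rightarrow> real \<Rightarrow> real measure \<Rightarrow> (real measure \<Rightarrow> real measure \<Rightarrow> ennreal) \<Rightarrow> real
   \<Rightarrow> real measure set" where
  "Qset lo hi P D eta = {Q. Delta lo hi (sets (BTheta lo hi)) Q \<and> D Q P \<le> ennreal eta}"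

definition Xint :: "real measure \<Rightarrow> (nat \<Rightarrow> real \<Rightarrow> real \<Rightarrow> real) \<Rightarrow> nat \<Rightarrow> real \<Rightarrow> real" where
  "Xint P x i th = (\<integral>th'. x i th th' \<partial>P)"

definition Tint :: "real measure \<Rightarrow> (nat \<Rightarrow> real \<Rightarrow> real \<Rightarrow> real) \<Rightarrow> nat \<Rightarrow> real \<Rightarrow> real" where
  "Tint P t i th = (\<integral>th'. t i th th' \<partial>P)"

definition Xmin ::
  "real \<Rightarrow> real \<Rightarrow> real measure \<Rightarrow> (real measure \<Rightarrow> real measure \<Rightarrow> ennreal) \<Rightarrow> real
   \<Rightarrow> (nat \<Rightarrow> real \<Rightarrow> real \<Rightarrow> real) \<Rightarrow> nat \<Rightarrow> real \<Rightarrow> real" where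
  "Xmin lo hi P D eta x i th = Inf ((\<lambda>Q. \<integral>th'. x i th th' \<partial>Q) ` Qset lo hi P D eta)"

definition Vrep ::
  "real \<Rightarrow> real \<Rightarrow> real measure \<Rightarrow> (real measure \<Rightarrow> real measure \<Rightarrow> ennreal) \<Rightarrow> real
   \<Rightarrow> (nat \<Rightarrow> real \<Rightarrow> real \<Rightarrow> real) \<Rightarrow> (nat \<Rightarrow> real \<Rightarrow> real \<Rightarrow> real)
   \<Rightarrow> nat \<Rightarrow> real \<Rightarrow> real \<Rightarrow> real" where
  "Vrep lo hi P D eta x t i th rep =
     Inf ((\<lambda>Q. \<integral>th'. th * x i rep th' - t i rep th' \<partial>Q) ` Qset lo hi P D eta)"

definition Umin ::
  "real \<Rightarrow> real \<Rightarrow> real measure \<Rightarrow> (real measure \<Rightarrow> real measure \<Rightarrow> ennreal) \<Rightarrow> real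
   \<Rightarrow> (nat \<Rightarrow> real \<Rightarrow> real \<Rightarrow> real) \<Rightarrow> (nat \<Rightarrow> real \<Rightarrow> real \<Rightarrow> real)
   \<Rightarrow> nat \<Rightarrow> real \<Rightarrow> real" where
  "Umin lo hi P D eta x t i th =
     Inf ((\<lambda>Q. \<integral>th'. th * x i th th' - t i th th' \<partial>Q) ` Qset lo hi P D eta)"

definition bdd_meas2 :: "real \<Rightarrow> real \<Rightarrow> (nat \<Rightarrow> real \<Rightarrow> real \<Rightarrow> real) \<Rightarrow> bool" where
  "bdd_meas2 lo hi f \<longleftrightarrow> (\<forall>i\<in>{1,2::nat}.
     (\<lambda>(a,b). f i a b) \<in> borel_measurable (BTheta lo hi \<Otimes>\<^sub>M BTheta lo hi) \<and>
     (\<exists>B. \<forall>a\<in>{lo..hi}. \<forall>b\<in>{lo..hi}. \<bar>f i a b\<bar> \<le> B))"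

definition allocation_rule :: "real \<Rightarrow> real \<Rightarrow> (nat \<Rightarrow> real \<Rightarrow> real \<Rightarrow> real) \<Rightarrow> bool" where
  "allocation_rule lo hi x \<longleftrightarrow> bdd_meas2 lo hi x \<and>
     (\<forall>a\<in>{lo..hi}. \<forall>b\<in>{lo..hi}. x 1 a b \<ge> 0 \<and> x 2 b a \<ge> 0 \<and> x 1 a b + x 2 b a \<le> 1)"

definition transfer_rule :: "real \<Rightarrow> real \<Rightarrow> (nat \<Rightarrow> real \<Rightarrow> real \<Rightarrow> real) \<Rightarrow> bool" where
  "transfer_rule lo hi t \<longleftrightarrow> bdd_meas2 lo hi t"

definition incentive_compatible ::
  "real \<Rightarrow> real \<Rightarrow> real measure \<Rightarrow> (real measure \<Rightarrow> real measure \<Rightarrow> ennreal) \<Rightarrow> real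
   \<Rightarrow> (nat \<Rightarrow> real \<Rightarrow> real \<Rightarrow> real) \<Rightarrow> (nat \<Rightarrow> real \<Rightarrow> real \<Rightarrow> real) \<Rightarrow> bool" where
  "incentive_compatible lo hi P D eta x t \<longleftrightarrow>
     (\<forall>i\<in>{1,2::nat}. \<forall>th\<in>{lo..hi}. \<forall>rep\<in>{lo..hi}.
        Vrep lo hi P D eta x t i th rep \<le> Vrep lo hi P D eta x t i th th)"

definition individually_rational ::
  "real \<Rightarrow> real \<Rightarrow> real measure \<Rightarrow> (real measure \<Rightarrow> real measure \<Rightarrow> ennreal) \<Rightarrow> real
   \<Rightarrow> (nat \<Rightarrow> real \<Rightarrow> real \<Rightarrow> real) \<Rightarrow> (nat \<Rightarrow> real \<Rightarrow> real \<Rightarrow> real) \<Rightarrow> bool" where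
  "individually_rational lo hi P D eta x t \<longleftrightarrow>
     (\<forall>i\<in>{1,2::nat}. \<forall>th\<in>{lo..hi}. Umin lo hi P D eta x t i th \<ge> 0)"

definition feasible ::
  "real \<Rightarrow> real \<Rightarrow> real measure \<Rightarrow> (real measure \<Rightarrow> real measure \<Rightarrow> ennreal) \<Rightarrow> real
   \<Rightarrow> (nat \<Rightarrow> real \<Rightarrow> real \<Rightarrow> real) \<Rightarrow> (nat \<Rightarrow> real \<Rightarrow> real \<Rightarrow> real) \<Rightarrow> bool" where
  "feasible lo hi P D eta x t \<longleftrightarrow>
     incentive_compatible lo hi P D eta x t \<and> individually_rational lo hi P D eta x t"

definition assumption_X ::
  "real \<Rightarrow> real \<Rightarrow> real measure \<Rightarrow> (real measure \<Rightarrow> real measure \<Rightarrow> ennreal) \<Rightarrow> real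
   \<Rightarrow> (nat \<Rightarrow> real \<Rightarrow> real \<Rightarrow> real) \<Rightarrow> bool" where
  "assumption_X lo hi P D eta x \<longleftrightarrow> (\<forall>i\<in>{1,2::nat}.
     (\<forall>th\<in>{lo..hi}. \<forall>th'\<in>{lo..hi}. th' \<noteq> th \<longrightarrow> x i th th' \<in> {0,1}) \<and>
     (\<forall>th\<in>{lo..hi}. Xint P x i th = 1 \<longrightarrow> th = hi) \<and>
     mono_on {lo..hi} (Xmin lo hi P D eta x i))"

definition K_limited ::
  "real \<Rightarrow> real \<Rightarrow> (nat \<Rightarrow> real \<Rightarrow> real \<Rightarrow> real) \<Rightarrow> real \<Rightarrow> (nat \<Rightarrow> real \<Rightarrow> real \<Rightarrow> real) \<Rightarrow> bool" where
  "K_limited lo hi x K t \<longleftrightarrow> (\<forall>i\<in>{1,2::nat}. \<forall>th\<in>{lo..hi}. th < hi \<longrightarrow>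
     (\<forall>thw\<in>{lo..hi}. \<forall>thl\<in>{lo..hi}. x i th thw = 1 \<and> x i th thl = 0 \<longrightarrow> - t i th thl \<le> K))"

definition win_lose_dependent ::
  "real \<Rightarrow> real \<Rightarrow> (nat \<Rightarrow> real \<Rightarrow> real \<Rightarrow> real) \<Rightarrow> (nat \<Rightarrow> real \<Rightarrow> real \<Rightarrow> real) \<Rightarrow> bool" where
  "win_lose_dependent lo hi x t \<longleftrightarrow> (\<exists>tw tl :: nat \<Rightarrow> real \<Rightarrow> real.
     \<forall>i\<in>{1,2::nat}. \<forall>th\<in>{lo..hi}. \<forall>th'\<in>{lo..hi}.
       t i th th' = tw i th * x i th th' + tl i th * (1 - x i th th') \<and>
       th - tw i th \<ge> - tl i th)"

definition objective :: "real measure \<Rightarrow> (nat \<Rightarrow> real \<Rightarrow> real \<Rightarrow> real) \<Rightarrow> real" where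
  "objective P t = (\<Sum>i\<in>{1,2::nat}. \<integral>th. Tint P t i th \<partial>P)"

definition solves_P ::
  "real \<Rightarrow> real \<Rightarrow> real measure \<Rightarrow> (real measure \<Rightarrow> real measure \<Rightarrow> ennreal) \<Rightarrow> real
   \<Rightarrow> (nat \<Rightarrow> real \<Rightarrow> real \<Rightarrow> real) \<Rightarrow> real \<Rightarrow> (nat \<Rightarrow> real \<Rightarrow> real \<Rightarrow> real) \<Rightarrow> bool" where
  "solves_P lo hi P D eta x K t \<longleftrightarrow>
     (let adm = (\<lambda>s. transfer_rule lo hi s \<and> feasible lo hi P D eta x s \<and> K_limited lo hi x K s)
      in adm t \<and> (\<forall>s. adm s \<longrightarrow> objective P s \<le> objective P t))"

definition solves_R ::
  "real \<Rightarrow> real \<Rightarrow> real measure \<Rightarrow> (real measure \<Rightarrow> real measure \<Rightarrow> ennreal) \<Rightarrow> real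
   \<Rightarrow> (nat \<Rightarrow> real \<Rightarrow> real \<Rightarrow> real) \<Rightarrow> real \<Rightarrow> (nat \<Rightarrow> real \<Rightarrow> real \<Rightarrow> real) \<Rightarrow> bool" where
  "solves_R lo hi P D eta x K t \<longleftrightarrow>
     (let adm = (\<lambda>s. transfer_rule lo hi s \<and> win_lose_dependent lo hi x s \<and>
                   (\<forall>i\<in>{1,2::nat}. \<forall>th\<in>{lo..hi}.
                      Umin lo hi P D eta x s i th = integral {lo..th} (Xmin lo hi P D eta x i)) \<and>
                   K_limited lo hi x K s)
      in adm t \<and> (\<forall>s. adm s \<longrightarrow> objective P s \<le> objective P t))"

definition thetaK ::
  "real \<Rightarrow> real \<Rightarrow> real measure \<Rightarrow> (real measure \<Rightarrow> real measure \<Rightarrow> ennreal) \<Rightarrow> real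
   \<Rightarrow> (nat \<Rightarrow> real \<Rightarrow> real \<Rightarrow> real) \<Rightarrow> real \<Rightarrow> nat \<Rightarrow> real" where
  "thetaK lo hi P D eta x K i =
     Sup {th \<in> {lo..hi}. integral {lo..th} (Xmin lo hi P D eta x i) \<le> K}"

definition tw_star ::
  "real \<Rightarrow> real \<Rightarrow> real measure \<Rightarrow> (real measure \<Rightarrow> real measure \<Rightarrow> ennreal) \<Rightarrow> real
   \<Rightarrow> (nat \<Rightarrow> real \<Rightarrow> real \<Rightarrow> real) \<Rightarrow> real \<Rightarrow> nat \<Rightarrow> real \<Rightarrow> real" where
  "tw_star lo hi P D eta x K i th =
     (if th \<le> thetaK lo hi P D eta x K i
      then th - integral {lo..th} (Xmin lo hi P D eta x i)
      else th - K - (1 / Xmin lo hi P D eta x i th) *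
                      (integral {lo..th} (Xmin lo hi P D eta x i) - K))"

definition tl_star ::
  "real \<Rightarrow> real \<Rightarrow> real measure \<Rightarrow> (real measure \<Rightarrow> real measure \<Rightarrow> ennreal) \<Rightarrow> real
   \<Rightarrow> (nat \<Rightarrow> real \<Rightarrow> real \<Rightarrow> real) \<Rightarrow> real \<Rightarrow> nat \<Rightarrow> real \<Rightarrow> real" where
  "tl_star lo hi P D eta x K i th =
     (if th \<le> thetaK lo hi P D eta x K i
      then - integral {lo..th} (Xmin lo hi P D eta x i)
      else - K)"

definition t_star ::
  "real \<Rightarrow> real \<Rightarrow> real measure \<Rightarrow> (real measure \<Rightarrow> real measure \<Rightarrow> ennreal) \<Rightarrow> real
   \<Rightarrow> (nat \<Rightarrow> real \<Rightarrow> real \<Rightarrow> real) \<Rightarrow> real \<Rightarrow> nat \<Rightarrow> real \<Rightarrow> real \<Rightarrow> real" where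
  "t_star lo hi P D eta x K i th th' =
     tw_star lo hi P D eta x K i th * x i th th' + tl_star lo hi P D eta x K i th * (1 - x i th th')"

end

theory Submission
  imports Defs
begin

text \<open>
  For a win-lose dependent transfer with premium \<open>a = \<theta> - t\<^sup>w(\<theta>) + t\<^sup>l(\<theta>) \<ge> 0\<close> the worst-case utility is
  \<open>-t\<^sup>l(\<theta>) + a X\<^sup>m\<^sup>i\<^sup>n(\<theta>)\<close>, so the envelope condition \<open>U\<^sup>m\<^sup>i\<^sup>n = U := \<integral> X\<^sup>m\<^sup>i\<^sup>n\<close> fixes
  \<open>t\<^sup>l = a X\<^sup>m\<^sup>i\<^sup>n - U\<close> and the expected transfer is \<open>\<theta> X - U - a (X - X\<^sup>m\<^sup>i\<^sup>n)\<close>.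
  K-limitation \<open>-t\<^sup>l \<le> K\<close> means \<open>a \<ge> max 0 ((U - K) / X\<^sup>m\<^sup>i\<^sup>n)\<close>, and \<open>t\<^sup>*\<close> charges exactly
  this premium. It is optimal because \<open>X\<^sup>m\<^sup>i\<^sup>n \<le> X\<close>, and the unique optimum because
  \<open>X\<^sup>m\<^sup>i\<^sup>n < X\<close> whenever \<open>0 < X < 1\<close>: by (D2), shifting a little weight of \<open>P\<close> onto the
  losing event yields an admissible belief.

  For problem (P), incentive compatibility still gives \<open>U\<^sup>m\<^sup>i\<^sup>n \<ge> U\<close> (integrated envelope
  inequality). Coarsening any admissible belief to the partition into winning and losing
  opponent types keeps it admissible by (D4) and (D5), and shows that an arbitrary feasible
  K-limited transfer does no better than a win-lose dependent one with premium at least that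
  of \<open>t\<^sup>*\<close>.
\<close>

lemma cInf_affine_image:
  fixes f :: "'a \<Rightarrow> real"
  assumes "S \<noteq> {}" and "\<And>q. q \<in> S \<Longrightarrow> m \<le> f q" and "0 \<le> a"
  shows "Inf ((\<lambda>q. c + a * f q) ` S) = c + a * Inf (f ` S)"
proof -
  have "mono (\<lambda>y. c + a * y)"
    using assms(3) by (intro monoI) (simp add: mult_left_mono)
  moreover have "continuous (at_right (Inf (f ` S))) (\<lambda>y. c + a * y)"
    by (intro continuous_intros)
  moreover have "bdd_below (f ` S)"
    using assms(2) by (rule bdd_belowI2)
  ultimately have "c + a * Inf (f ` S) = (INF y\<in>f ` S. c + a * y)"
    using assms(1) by (intro continuous_at_Inf_mono) auto
  thus ?thesis by (simp add: image_comp o_def)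
qed

lemma integral_le_diff_uniform_steps:
  fixes f g :: "real \<Rightarrow> real"
  assumes mono: "mono_on {a..b} g"
    and slope: "\<And>r s. a \<le> r \<Longrightarrow> r \<le> s \<Longrightarrow> s \<le> b \<Longrightarrow> (s - r) * g r \<le> f s - f r"
    and h: "0 < h" and n: "a + real n * h \<le> b"
  shows "integral {a..a + real n * h} g \<le> f (a + real n * h) - f a + h * (g (a + real n * h) - g a)"
  using n
proof (induction n)
  case 0
  then show ?case by simp
next
  case (Suc n)
  let ?c = "a + real n * h" and ?d = "a + real (Suc n) * h"
  have c: "a \<le> ?c" "?c \<le> ?d" and d: "?d \<le> b"
    using h Suc.prems by (auto simp: algebra_simps)
  have g_int: "g integrable_on {u..v}" if "a \<le> u" "v \<le> b" for u v
    using mono that by (intro integrable_on_mono_on) (auto intro: mono_on_subset)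
  have split: "integral {a..?d} g = integral {a..?c} g + integral {?c..?d} g"
    using Henstock_Kurzweil_Integration.integral_combine[OF c g_int[OF order.refl d]] by simp
  have "integral {?c..?d} g \<le> integral {?c..?d} (\<lambda>_. g ?d)"
    using c d by (intro integral_le g_int) (auto intro!: mono_onD[OF mono])
  then have last_step: "integral {?c..?d} g \<le> h * g ?d"
    using c by (simp add: algebra_simps)
  have "h * g ?c \<le> f ?d - f ?c"
    using slope[OF c d] by (simp add: algebra_simps)
  then show ?case
    using split last_step Suc.IH c d by (simp add: algebra_simps)
qed

text \<open>The integrated envelope inequality, via Riemann sums over uniform partitions.\<close>

lemma integral_le_diff_of_slope_bound:
  fixes f g :: "real \<Rightarrow> real"
  assumes ab: "a \<le> b" and mono: "mono_on {a..b} g"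
    and slope: "\<And>r s. a \<le> r \<Longrightarrow> r \<le> s \<Longrightarrow> s \<le> b \<Longrightarrow> (s - r) * g r \<le> f s - f r"
  shows "integral {a..b} g \<le> f b - f a"
proof (cases "a = b")
  case False
  show ?thesis
  proof (rule field_le_epsilon)
    fix e :: real assume e: "0 < e"
    have var: "0 \<le> (b - a) * (g b - g a)"
      using ab mono by (simp add: mono_onD)
    obtain n :: nat where n: "(b - a) * (g b - g a) / e < real n"
      using reals_Archimedean2 by blast
    moreover have "0 \<le> (b - a) * (g b - g a) / e"
      using var e by simp
    ultimately have n_pos: "0 < real n"
      by linarith
    define h where "h = (b - a) / real n"
    have h: "0 < h" "a + real n * h = b"
      using n_pos ab False by (auto simp: h_def)
    have "integral {a..b} g \<le> f b - f a + h * (g b - g a)"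
      using integral_le_diff_uniform_steps[OF mono slope h(1), of n] h(2) by simp
    also have "h * (g b - g a) \<le> e"
      using n n_pos e by (simp add: h_def field_simps)
    finally show "integral {a..b} g \<le> f b - f a + e" by simp
  qed
qed simp

lemma sigma_algebra_two_cells:
  assumes "W \<subseteq> \<Omega>"
  shows "sigma_algebra \<Omega> {{}, W, \<Omega> - W, \<Omega>}"
proof -
  have "algebra \<Omega> {{}, W, \<Omega> - W, \<Omega>}"
    unfolding algebra_iff_Un using assms by auto
  then show ?thesis
    by (rule algebra.is_sigma_algebra) simp
qed

lemma mix_density:
  fixes M :: "real measure" and g :: "real \<Rightarrow> real"
  assumes g: "g \<in> borel_measurable M" "\<And>z. 0 \<le> g z" and e: "0 \<le> e" "e \<le> 1"
  shows "mix e (density M (\<lambda>z. ennreal (g z))) M = density M (\<lambda>z. ennreal (e * g z + (1 - e)))"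
proof -
  let ?k = "\<lambda>z. ennreal (e * g z + (1 - e))"
  have "density M ?k = measure_of (space M) (sets M) (emeasure (density M ?k))"
    by (metis measure_of_of_measure space_density sets_density)
  also have "\<dots> = mix e (density M (\<lambda>z. ennreal (g z))) M"
    unfolding mix_def
  proof (rule measure_of_eq[OF sets.space_closed])
    fix A assume "A \<in> sigma_sets (space M) (sets M)"
    then have A: "A \<in> sets M"
      by (simp add: sets.sigma_sets_eq)
    have "emeasure (density M ?k) A = (\<integral>\<^sup>+z. ?k z * indicator A z \<partial>M)"
      using g A by (intro emeasure_density) auto
    also have "\<dots> = (\<integral>\<^sup>+z. ennreal e * (ennreal (g z) * indicator A z) + ennreal (1 - e) * indicator A z \<partial>M)"
      using g e by (intro nn_integral_cong)
        (auto simp: indicator_def ennreal_mult[symmetric] ennreal_plus[symmetric] simp del: ennreal_plus)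
    also have "\<dots> = ennreal e * (\<integral>\<^sup>+z. ennreal (g z) * indicator A z \<partial>M) + ennreal (1 - e) * emeasure M A"
      using g A by (simp add: nn_integral_add nn_integral_cmult nn_integral_cmult_indicator)
    also have "\<dots> = ennreal e * emeasure (density M (\<lambda>z. ennreal (g z))) A + ennreal (1 - e) * emeasure M A"
      using g A by (simp add: emeasure_density)
    finally show "emeasure (density M ?k) A
        = ennreal e * emeasure (density M (\<lambda>z. ennreal (g z))) A + ennreal (1 - e) * emeasure M A" .
  qed
  finally show ?thesis ..
qed

lemma integral_density_mixture:
  fixes g f :: "'a \<Rightarrow> real"
  assumes g: "g \<in> borel_measurable M" "\<And>z. 0 \<le> g z" and e: "0 \<le> e" "e \<le> 1"
    and f: "integrable M f" "integrable M (\<lambda>z. g z * f z)"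
  shows "(\<integral>z. f z \<partial>density M (\<lambda>z. e * g z + (1 - e)))
    = e * (\<integral>z. g z * f z \<partial>M) + (1 - e) * (\<integral>z. f z \<partial>M)"
proof -
  have "(\<integral>z. f z \<partial>density M (\<lambda>z. e * g z + (1 - e))) = (\<integral>z. (e * g z + (1 - e)) * f z \<partial>M)"
    using g e f(1) by (subst integral_density) (auto intro!: AE_I2 add_nonneg_nonneg)
  also have "\<dots> = (\<integral>z. e * (g z * f z) + (1 - e) * f z \<partial>M)"
    by (simp add: algebra_simps)
  also have "\<dots> = e * (\<integral>z. g z * f z \<partial>M) + (1 - e) * (\<integral>z. f z \<partial>M)"
    using f by simp
  finally show ?thesis .
qed

lemma integral_two_cells:
  fixes u :: "'a \<Rightarrow> real"
  assumes u: "integrable M u" and W: "W \<in> sets M"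
  shows "(\<integral>z. u z \<partial>M) = (\<integral>z. u z * indicator W z \<partial>M) + (\<integral>z. u z * indicator (space M - W) z \<partial>M)"
proof -
  have "(\<integral>z. u z \<partial>M) = (\<integral>z. u z * indicator W z + u z * indicator (space M - W) z \<partial>M)"
    using sets.sets_into_space[OF W] by (intro Bochner_Integration.integral_cong) (auto split: split_indicator)
  also have "\<dots> = (\<integral>z. u z * indicator W z \<partial>M) + (\<integral>z. u z * indicator (space M - W) z \<partial>M)"
    using u W by (simp add: integrable_real_mult_indicator)
  finally show ?thesis .
qed

lemma density_restr_to_subalg:
  assumes sub: "subalgebra M F" and h: "h \<in> borel_measurable (restr_to_subalg M F)"
  shows "density (restr_to_subalg M F) h = restr_to_subalg (density M h) F"
proof (rule measure_eqI)
  have subQ: "subalgebra (density M h) F"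
    using sub by (simp add: subalgebra_def)
  have "h \<in> borel_measurable F"
    using h unfolding measurable_cong_sets[OF sets_restr_to_subalg[OF sub] refl] .
  then have hM: "h \<in> borel_measurable M"
    by (rule measurable_from_subalg[OF sub])
  show "sets (density (restr_to_subalg M F) h) = sets (restr_to_subalg (density M h) F)"
    using sets_restr_to_subalg[OF sub] sets_restr_to_subalg[OF subQ] by simp
  fix A assume "A \<in> sets (density (restr_to_subalg M F) h)"
  then have A: "A \<in> sets F"
    using sets_restr_to_subalg[OF sub] by simp
  then have AM: "A \<in> sets M"
    using sub unfolding subalgebra_def by auto
  have "emeasure (density (restr_to_subalg M F) h) A = (\<integral>\<^sup>+z. h z * indicator A z \<partial>restr_to_subalg M F)"
    using h A sets_restr_to_subalg[OF sub] by (intro emeasure_density) auto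
  also have "\<dots> = (\<integral>\<^sup>+z. h z * indicator A z \<partial>M)"
    using h A sub sets_restr_to_subalg[OF sub] emeasure_restr_to_subalg[OF sub]
    by (intro nn_integral_subalgebra) (auto simp: space_restr_to_subalg subalgebra_def)
  also have "\<dots> = emeasure (density M h) A"
    using hM AM by (simp add: emeasure_density)
  also have "\<dots> = emeasure (restr_to_subalg (density M h) F) A"
    using emeasure_restr_to_subalg[OF subQ A] by simp
  finally show "emeasure (density (restr_to_subalg M F) h) A = emeasure (restr_to_subalg (density M h) F) A" .
qed

lemma RN_deriv_restr_two_cells:
  fixes M :: "real measure" and c1 c2 :: real
  assumes M: "prob_space M" and W: "W \<in> sets M"
  defines "E \<equiv> {{}, W, space M - W, space M}"
    and "h \<equiv> \<lambda>z. ennreal (c1 * indicator W z + c2 * indicator (space M - W) z)"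
  shows "AE z in M. RN_deriv (restr M E) (restr (density M h) E) z = RN_deriv M (density M h) z"
proof -
  have E_sub: "E \<subseteq> Pow (space M)"
    using sets.sets_into_space[OF W] by (auto simp: E_def)
  have E_sa: "sigma_algebra (space M) E"
    unfolding E_def by (rule sigma_algebra_two_cells[OF sets.sets_into_space[OF W]])
  define F where "F = measure_of (space M) E (\<lambda>_. 0)"
  have sets_F: "sets F = E" and space_F: "space F = space M"
    using E_sub sigma_algebra.sigma_sets_eq[OF E_sa] by (simp_all add: F_def)
  have sub: "subalgebra M F"
    unfolding subalgebra_def using sets_F space_F W by (auto simp: E_def)
  have restr_eq: "restr N E = restr_to_subalg N F" for N
    unfolding restr_def restr_to_subalg_def sets_F ..
  have h_meas: "h \<in> borel_measurable N" if "W \<in> sets N" "space M - W \<in> sets N" for N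
    using that unfolding h_def by measurable
  have hM: "h \<in> borel_measurable M"
    using W by (intro h_meas) auto
  have hF: "h \<in> borel_measurable (restr_to_subalg M F)"
    using sets_restr_to_subalg[OF sub] sets_F by (intro h_meas) (auto simp: E_def)
  have "sigma_finite_measure (restr_to_subalg M F)"
    using prob_space_restr_to_subalg[OF sub M] by (rule prob_space_imp_sigma_finite)
  then have "AE z in restr_to_subalg M F. h z = RN_deriv (restr_to_subalg M F) (restr_to_subalg (density M h) F) z"
    using hF density_restr_to_subalg[OF sub hF] by (rule sigma_finite_measure.RN_deriv_unique)
  then have coarse: "AE z in M. h z = RN_deriv (restr M E) (restr (density M h) E) z"
    unfolding restr_eq by (rule AE_restr_to_subalg[OF sub])
  have fine: "AE z in M. h z = RN_deriv M (density M h) z"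
    using prob_space_imp_sigma_finite[OF M] hM by (rule sigma_finite_measure.RN_deriv_unique) simp
  from coarse fine show ?thesis
    by eventually_elim simp
qed

lemma AE_eq_if_integral_eq_AE_le:
  fixes f g :: "'a \<Rightarrow> real"
  assumes "integrable M f" "integrable M g" "AE z in M. f z \<le> g z"
    and "(\<integral>z. f z \<partial>M) = (\<integral>z. g z \<partial>M)"
  shows "AE z in M. f z = g z"
proof -
  have "AE z in M. g z - f z = 0"
    using assms by (subst integral_nonneg_eq_0_iff_AE[symmetric]) auto
  then show ?thesis
    by eventually_elim simp
qed

section \<open>Worst-case expectations\<close>

locale transfer_problem =
  fixes lo hi :: real and P :: "real measure"
    and D :: "real measure \<Rightarrow> real measure \<Rightarrow> ennreal"
    and eta :: real and x :: "nat \<Rightarrow> real \<Rightarrow> real \<Rightarrow> real" and K :: real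
  assumes lo_pos: "0 < lo" and lo_less_hi: "lo < hi"
    and P_Delta: "Delta lo hi (sets (BTheta lo hi)) P"
    and P_atomless: "\<forall>th. emeasure P {th} = 0"
    and eta_pos: "eta > 0"
    and D: "assumption_D lo hi D"
    and x_allocation: "allocation_rule lo hi x"
    and x_X: "assumption_X lo hi P D eta x"
    and K_nonneg: "K \<ge> 0"
begin

abbreviation "\<Theta> \<equiv> BTheta lo hi"
abbreviation "Beliefs \<equiv> Qset lo hi P D eta"
abbreviation "Xm \<equiv> Xmin lo hi P D eta x"
abbreviation "XP \<equiv> Xint P x"
abbreviation "Um \<equiv> Umin lo hi P D eta x"
abbreviation "V \<equiv> Vrep lo hi P D eta x"
abbreviation "thK \<equiv> thetaK lo hi P D eta x K"
abbreviation "twS \<equiv> tw_star lo hi P D eta x K"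
abbreviation "tlS \<equiv> tl_star lo hi P D eta x K"
abbreviation "ts \<equiv> t_star lo hi P D eta x K"

definition U :: "nat \<Rightarrow> real \<Rightarrow> real" where
  "U i th = integral {lo..th} (Xm i)"

lemma space_Theta [simp]: "space \<Theta> = {lo..hi}"
  by (simp add: BTheta_def)

lemma P_prob: "prob_space P" and space_P [simp]: "space P = {lo..hi}" and sets_P: "sets P = sets \<Theta>"
  using P_Delta by (auto simp: Delta_def)

sublocale P: prob_space P
  by (rule P_prob)

lemma is_salg_Theta: "is_salg lo hi (sets \<Theta>)"
  unfolding is_salg_def using sets.sigma_algebra_axioms[of \<Theta>] by simp

lemma D_self: "D P P = 0"
  using D is_salg_Theta P_Delta unfolding assumption_D_def by blast

lemma D_finite_imp_ac: "Delta lo hi (sets \<Theta>) Q \<Longrightarrow> D Q P < \<infinity> \<Longrightarrow> absolutely_continuous P Q"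
  using D is_salg_Theta P_Delta unfolding assumption_D_def by blast

lemma D_mix_continuous:
  assumes "Delta lo hi (sets \<Theta>) Q" "absolutely_continuous P Q" "AE z in P. RN_deriv P Q z \<le> ennreal c"
  shows "continuous_on {0..1} (\<lambda>e. D (mix e Q P) P)"
  using D is_salg_Theta P_Delta assms unfolding assumption_D_def by blast

lemma
  assumes "Delta lo hi (sets \<Theta>) Q" and "is_salg lo hi E" "E \<subseteq> sets \<Theta>"
  shows D_restr_le: "D (restr Q E) (restr P E) \<le> D Q P"
    and D_restr_eq: "absolutely_continuous P Q \<Longrightarrow>
      (AE z in P. RN_deriv (restr P E) (restr Q E) z = RN_deriv P Q z) \<Longrightarrow> D (restr Q E) (restr P E) = D Q P"
  using D is_salg_Theta P_Delta assms unfolding assumption_D_def by blast+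

lemma BeliefsI: "Delta lo hi (sets \<Theta>) Q \<Longrightarrow> D Q P \<le> ennreal eta \<Longrightarrow> Q \<in> Beliefs"
  by (simp add: Qset_def)

lemma
  assumes "Q \<in> Beliefs"
  shows Beliefs_Delta: "Delta lo hi (sets \<Theta>) Q" and Beliefs_D_le: "D Q P \<le> ennreal eta"
    and Beliefs_prob: "prob_space Q" and space_Belief: "space Q = {lo..hi}"
    and sets_Belief: "sets Q = sets \<Theta>" and Beliefs_ac: "absolutely_continuous P Q"
proof -
  show Q: "Delta lo hi (sets \<Theta>) Q" and le: "D Q P \<le> ennreal eta"
    using assms by (simp_all add: Qset_def)
  then show "prob_space Q" "space Q = {lo..hi}" "sets Q = sets \<Theta>"
    by (auto simp: Delta_def)
  have "D Q P < \<infinity>"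
    using le by (simp add: le_less_trans)
  with Q show "absolutely_continuous P Q"
    by (rule D_finite_imp_ac)
qed

lemma P_in_Beliefs: "P \<in> Beliefs"
  using D_self P_Delta eta_pos by (simp add: Qset_def)

lemma Beliefs_nonempty: "Beliefs \<noteq> {}"
  using P_in_Beliefs by auto

lemma measurable_Theta_cong: "f \<in> borel_measurable \<Theta> \<Longrightarrow> sets M = sets \<Theta> \<Longrightarrow> f \<in> borel_measurable M"
  using measurable_cong_sets by blast

lemma bdd_meas2_section_measurable:
  assumes "bdd_meas2 lo hi s" "i \<in> {1,2}" "th \<in> {lo..hi}"
  shows "s i th \<in> borel_measurable \<Theta>"
proof -
  have "(\<lambda>(a,b). s i a b) \<in> borel_measurable (\<Theta> \<Otimes>\<^sub>M \<Theta>)"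
    using assms unfolding bdd_meas2_def by blast
  from measurable_Pair2[OF this, of th] show ?thesis
    using assms by simp
qed

lemma bdd_meas2_bounded:
  assumes "bdd_meas2 lo hi s" "i \<in> {1,2}"
  obtains C where "\<And>a b. a \<in> {lo..hi} \<Longrightarrow> b \<in> {lo..hi} \<Longrightarrow> \<bar>s i a b\<bar> \<le> C"
  using assms unfolding bdd_meas2_def by blast

lemma x_measurable: "i \<in> {1,2} \<Longrightarrow> th \<in> {lo..hi} \<Longrightarrow> x i th \<in> borel_measurable \<Theta>"
  using x_allocation bdd_meas2_section_measurable by (simp add: allocation_rule_def)

lemma x_bounds:
  assumes "i \<in> {1,2}" "a \<in> {lo..hi}" "b \<in> {lo..hi}"
  shows "0 \<le> x i a b" "x i a b \<le> 1"
proof -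
  have "x 1 a' b' \<ge> 0 \<and> x 2 b' a' \<ge> 0 \<and> x 1 a' b' + x 2 b' a' \<le> 1"
    if "a' \<in> {lo..hi}" "b' \<in> {lo..hi}" for a' b'
    using x_allocation that by (simp add: allocation_rule_def)
  from this[of a b] this[of b a] assms show "0 \<le> x i a b" "x i a b \<le> 1"
    by auto
qed

lemma x_binary: "i \<in> {1,2} \<Longrightarrow> th \<in> {lo..hi} \<Longrightarrow> z \<in> {lo..hi} \<Longrightarrow> z \<noteq> th \<Longrightarrow> x i th z \<in> {0,1}"
  using x_X unfolding assumption_X_def by blast

lemma XP_eq_1_imp_hi: "i \<in> {1,2} \<Longrightarrow> th \<in> {lo..hi} \<Longrightarrow> XP i th = 1 \<Longrightarrow> th = hi"
  using x_X unfolding assumption_X_def by blast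

lemma Xm_mono: "i \<in> {1,2} \<Longrightarrow> mono_on {lo..hi} (Xm i)"
  using x_X unfolding assumption_X_def by blast

lemma integrable_Belief:
  fixes f :: "real \<Rightarrow> real" and C :: real
  assumes "Q \<in> Beliefs" "f \<in> borel_measurable \<Theta>" "\<And>z. z \<in> {lo..hi} \<Longrightarrow> \<bar>f z\<bar> \<le> C"
  shows "integrable Q f"
proof -
  interpret Q: prob_space Q
    using Beliefs_prob[OF assms(1)] .
  show ?thesis
    using assms measurable_Theta_cong[OF assms(2) sets_Belief[OF assms(1)]]
    by (intro Q.integrable_const_bound[where B = C]) (auto simp: space_Belief)
qed

lemma integrable_x: "Q \<in> Beliefs \<Longrightarrow> i \<in> {1,2} \<Longrightarrow> th \<in> {lo..hi} \<Longrightarrow> integrable Q (x i th)"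
  using x_bounds x_measurable by (intro integrable_Belief[where C = 1]) auto

lemma integral_x_bounds:
  assumes "Q \<in> Beliefs" "i \<in> {1,2}" "th \<in> {lo..hi}"
  shows "0 \<le> (\<integral>z. x i th z \<partial>Q)" "(\<integral>z. x i th z \<partial>Q) \<le> 1"
proof -
  interpret Q: prob_space Q
    using Beliefs_prob[OF assms(1)] .
  show "0 \<le> (\<integral>z. x i th z \<partial>Q)"
    using assms x_bounds by (intro Bochner_Integration.integral_nonneg) (auto simp: space_Belief)
  have "(\<integral>z. x i th z \<partial>Q) \<le> (\<integral>z. 1 \<partial>Q)"
    using assms x_bounds integrable_x by (intro integral_mono) (auto simp: space_Belief)
  then show "(\<integral>z. x i th z \<partial>Q) \<le> 1"
    by (simp add: Q.prob_space)
qed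

lemma integral_affine_x:
  assumes "Q \<in> Beliefs" "i \<in> {1,2}" "r \<in> {lo..hi}"
  shows "(\<integral>z. \<alpha> + \<beta> * x i r z \<partial>Q) = \<alpha> + \<beta> * (\<integral>z. x i r z \<partial>Q)"
proof -
  interpret Q: prob_space Q
    using Beliefs_prob[OF assms(1)] .
  show ?thesis
    using integrable_x[OF assms] by (simp add: Q.prob_space)
qed

lemma Xm_le_integral: "Q \<in> Beliefs \<Longrightarrow> i \<in> {1,2} \<Longrightarrow> th \<in> {lo..hi} \<Longrightarrow> Xm i th \<le> (\<integral>z. x i th z \<partial>Q)"
  unfolding Xmin_def by (rule cInf_lower) (auto intro!: bdd_belowI2[where m = 0] integral_x_bounds)

lemma Xm_bounds:
  assumes "i \<in> {1,2}" "th \<in> {lo..hi}"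
  shows "0 \<le> Xm i th" "Xm i th \<le> XP i th" "XP i th \<le> 1"
proof -
  show "0 \<le> Xm i th"
    unfolding Xmin_def using assms Beliefs_nonempty integral_x_bounds by (intro cInf_greatest) auto
  show "Xm i th \<le> XP i th" "XP i th \<le> 1"
    using Xm_le_integral[OF P_in_Beliefs assms] integral_x_bounds[OF P_in_Beliefs assms]
    by (simp_all add: Xint_def)
qed

lemma XP_less_1: "i \<in> {1,2} \<Longrightarrow> th \<in> {lo..hi} \<Longrightarrow> th < hi \<Longrightarrow> XP i th < 1"
  using XP_eq_1_imp_hi Xm_bounds(3) by fastforce

lemma
  assumes i: "i \<in> {1,2}" and r: "r \<in> {lo..hi}"
  shows Inf_affine_x_le: "Inf ((\<lambda>Q. \<alpha> + \<beta> * (\<integral>z. x i r z \<partial>Q)) ` Beliefs) \<le> \<alpha> + \<beta> * Xm i r"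
    and Inf_affine_x_eq: "0 \<le> \<beta> \<Longrightarrow> Inf ((\<lambda>Q. \<alpha> + \<beta> * (\<integral>z. x i r z \<partial>Q)) ` Beliefs) = \<alpha> + \<beta> * Xm i r"
proof -
  show eq: "Inf ((\<lambda>Q. \<alpha> + \<beta> * (\<integral>z. x i r z \<partial>Q)) ` Beliefs) = \<alpha> + \<beta> * Xm i r" if "0 \<le> \<beta>"
    unfolding Xmin_def using Beliefs_nonempty integral_x_bounds[OF _ i r] that
    by (intro cInf_affine_image[where m = 0]) auto
  show "Inf ((\<lambda>Q. \<alpha> + \<beta> * (\<integral>z. x i r z \<partial>Q)) ` Beliefs) \<le> \<alpha> + \<beta> * Xm i r"
  proof (cases "0 \<le> \<beta>")
    case False
    have "bdd_below ((\<lambda>Q. \<alpha> + \<beta> * (\<integral>z. x i r z \<partial>Q)) ` Beliefs)"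
      using integral_x_bounds[OF _ i r] False
      by (intro bdd_belowI2[where m = "\<alpha> + \<beta>"]) (simp add: mult_le_cancel_left1)
    then have "Inf ((\<lambda>Q. \<alpha> + \<beta> * (\<integral>z. x i r z \<partial>Q)) ` Beliefs) \<le> \<alpha> + \<beta> * XP i r"
      using P_in_Beliefs by (auto intro!: cInf_lower simp: Xint_def)
    also have "\<dots> \<le> \<alpha> + \<beta> * Xm i r"
      using Xm_bounds(2)[OF i r] False by (simp add: mult_left_mono_neg)
    finally show ?thesis .
  qed (simp add: eq)
qed

lemma le_Xm_if_le_all_Beliefs:
  assumes i: "i \<in> {1,2}" and r: "r \<in> {lo..hi}" and "0 \<le> \<beta>"
    and le: "\<And>Q. Q \<in> Beliefs \<Longrightarrow> y \<le> \<beta> * (\<integral>z. x i r z \<partial>Q)"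
  shows "y \<le> \<beta> * Xm i r"
proof -
  have "y \<le> Inf ((\<lambda>Q. 0 + \<beta> * (\<integral>z. x i r z \<partial>Q)) ` Beliefs)"
    using le Beliefs_nonempty by (intro cInf_greatest) auto
  then show ?thesis
    using Inf_affine_x_eq[OF i r \<open>0 \<le> \<beta>\<close>, of 0] by simp
qed

lemma
  assumes i: "i \<in> {1,2}" and r: "r \<in> {lo..hi}"
    and s: "\<And>z. z \<in> {lo..hi} \<Longrightarrow> s z = w * x i r z + l * (1 - x i r z)"
  shows Inf_win_lose_le: "Inf ((\<lambda>Q. \<integral>z. c * x i r z - s z \<partial>Q) ` Beliefs) \<le> - l + (c - w + l) * Xm i r"
    and Inf_win_lose_eq: "0 \<le> c - w + l \<Longrightarrow>
      Inf ((\<lambda>Q. \<integral>z. c * x i r z - s z \<partial>Q) ` Beliefs) = - l + (c - w + l) * Xm i r"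
proof -
  have "(\<lambda>Q. \<integral>z. c * x i r z - s z \<partial>Q) ` Beliefs = (\<lambda>Q. - l + (c - w + l) * (\<integral>z. x i r z \<partial>Q)) ` Beliefs"
  proof (rule image_cong[OF refl])
    fix Q assume Q: "Q \<in> Beliefs"
    have "(\<integral>z. c * x i r z - s z \<partial>Q) = (\<integral>z. - l + (c - w + l) * x i r z \<partial>Q)"
      using s by (intro Bochner_Integration.integral_cong) (auto simp: space_Belief[OF Q] algebra_simps)
    also have "\<dots> = - l + (c - w + l) * (\<integral>z. x i r z \<partial>Q)"
      by (rule integral_affine_x[OF Q i r])
    finally show "(\<integral>z. c * x i r z - s z \<partial>Q) = - l + (c - w + l) * (\<integral>z. x i r z \<partial>Q)" .
  qed
  note image_eq = this
  show "Inf ((\<lambda>Q. \<integral>z. c * x i r z - s z \<partial>Q) ` Beliefs) \<le> - l + (c - w + l) * Xm i r"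
    unfolding image_eq by (rule Inf_affine_x_le[OF i r])
  show "0 \<le> c - w + l \<Longrightarrow> Inf ((\<lambda>Q. \<integral>z. c * x i r z - s z \<partial>Q) ` Beliefs) = - l + (c - w + l) * Xm i r"
    unfolding image_eq by (rule Inf_affine_x_eq[OF i r])
qed

section \<open>The transfer \<open>t\<^sup>*\<close>\<close>

lemma Xm_integrable: "i \<in> {1,2} \<Longrightarrow> lo \<le> a \<Longrightarrow> b \<le> hi \<Longrightarrow> Xm i integrable_on {a..b}"
  by (rule integrable_on_mono_on) (auto intro: mono_on_subset[OF Xm_mono])

lemma U_lo [simp]: "U i lo = 0"
  by (simp add: U_def)

lemma
  assumes i: "i \<in> {1,2}" and rs: "lo \<le> r" "r \<le> s" "s \<le> hi"
  shows U_diff_ge: "(s - r) * Xm i r \<le> U i s - U i r"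
    and U_diff_le: "U i s - U i r \<le> (s - r) * Xm i s"
proof -
  have diff: "U i s - U i r = integral {r..s} (Xm i)"
    using Henstock_Kurzweil_Integration.integral_combine[OF rs(1,2) Xm_integrable[OF i order.refl rs(3)]]
    by (simp add: U_def)
  have Xm_le: "Xm i u \<le> Xm i v" if "r \<le> u" "u \<le> v" "v \<le> s" for u v
    using that rs by (intro mono_onD[OF Xm_mono[OF i]]) auto
  have "integral {r..s} (\<lambda>_. Xm i r) \<le> integral {r..s} (Xm i)"
    using rs Xm_le by (intro integral_le Xm_integrable[OF i]) auto
  then show "(s - r) * Xm i r \<le> U i s - U i r"
    using diff rs by simp
  have "integral {r..s} (Xm i) \<le> integral {r..s} (\<lambda>_. Xm i s)"
    using rs Xm_le by (intro integral_le Xm_integrable[OF i]) auto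
  then show "U i s - U i r \<le> (s - r) * Xm i s"
    using diff rs by simp
qed

lemma U_nonneg:
  assumes i: "i \<in> {1,2}" and th: "th \<in> {lo..hi}"
  shows "0 \<le> U i th"
proof -
  have "0 \<le> (th - lo) * Xm i lo"
    using th Xm_bounds(1)[OF i, of lo] lo_less_hi by (intro mult_nonneg_nonneg) auto
  also have "\<dots> \<le> U i th"
    using U_diff_ge[OF i, of lo th] th by simp
  finally show ?thesis .
qed

lemma U_le: "i \<in> {1,2} \<Longrightarrow> th \<in> {lo..hi} \<Longrightarrow> U i th \<le> (th - lo) * Xm i th"
  using U_diff_le[of i lo th] by simp

lemma U_mono:
  assumes i: "i \<in> {1,2}" and rs: "lo \<le> r" "r \<le> s" "s \<le> hi"
  shows "U i r \<le> U i s"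
proof -
  have "0 \<le> (s - r) * Xm i r"
    using rs Xm_bounds(1)[OF i, of r] by simp
  with U_diff_ge[OF i rs] show ?thesis
    by simp
qed

lemma U_le_length: "i \<in> {1,2} \<Longrightarrow> th \<in> {lo..hi} \<Longrightarrow> U i th \<le> hi - lo"
  using U_le[of i th] Xm_bounds[of i th] mult_left_le[of "Xm i th" "th - lo"] by auto

lemma U_continuous: "i \<in> {1,2} \<Longrightarrow> continuous_on {lo..hi} (U i)"
  unfolding U_def[abs_def] by (rule indefinite_integral_continuous_1) (rule Xm_integrable, auto)

lemma
  assumes i: "i \<in> {1,2}"
  shows thK_in: "thK i \<in> {lo..hi}" and U_thK: "U i (thK i) \<le> K"
    and le_thK: "th \<in> {lo..hi} \<Longrightarrow> U i th \<le> K \<Longrightarrow> th \<le> thK i"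
proof -
  define S where "S = {th \<in> {lo..hi}. U i th \<le> K}"
  have thK_eq: "thK i = Sup S"
    by (simp add: thetaK_def S_def U_def)
  have "lo \<in> S" and bdd: "bdd_above S"
    using lo_less_hi K_nonneg by (auto simp: S_def intro: bdd_aboveI[where M = hi])
  moreover have "closed S"
    using continuous_closed_preimage[OF U_continuous[OF i] closed_atLeastAtMost closed_atMost, of K]
    by (simp add: S_def vimage_def Int_def)
  ultimately have "thK i \<in> S"
    unfolding thK_eq by (intro closed_contains_Sup) auto
  then show "thK i \<in> {lo..hi}" "U i (thK i) \<le> K"
    by (simp_all add: S_def)
  show "th \<in> {lo..hi} \<Longrightarrow> U i th \<le> K \<Longrightarrow> th \<le> thK i"
    unfolding thK_eq using bdd by (intro cSup_upper) (auto simp: S_def)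
qed

lemma U_le_K: "i \<in> {1,2} \<Longrightarrow> th \<in> {lo..hi} \<Longrightarrow> th \<le> thK i \<Longrightarrow> U i th \<le> K"
  using U_thK[of i] U_mono[of i th "thK i"] thK_in[of i] by auto

lemma above_thK:
  assumes i: "i \<in> {1,2}" and th: "th \<in> {lo..hi}" and gt: "thK i < th"
  shows "K < U i th" and "0 < Xm i th"
proof -
  show "K < U i th"
    using le_thK[OF i th] gt by force
  then have "0 < (th - lo) * Xm i th"
    using K_nonneg U_le[OF i th] by linarith
  then show "0 < Xm i th"
    using th Xm_bounds(1)[OF i th] by (simp add: zero_less_mult_iff)
qed

text \<open>The coefficient of \<open>X\<^sup>m\<^sup>i\<^sup>n\<close> in the worst-case utility of a win-lose dependent transfer.\<close>

definition premium :: "nat \<Rightarrow> real \<Rightarrow> real" where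
  "premium i th = th - twS i th + tlS i th"

lemma premium_eq: "premium i th = (if th \<le> thK i then 0 else (U i th - K) / Xm i th)"
  by (simp add: premium_def tw_star_def tl_star_def U_def)

lemma tlS_eq: "tlS i th = (if th \<le> thK i then - U i th else - K)"
  by (simp add: tl_star_def U_def)

lemma
  assumes i: "i \<in> {1,2}" and th: "th \<in> {lo..hi}"
  shows tlS_premium: "tlS i th = premium i th * Xm i th - U i th"
    and premium_nonneg: "0 \<le> premium i th"
    and premium_le: "premium i th \<le> hi - lo"
proof -
  show "tlS i th = premium i th * Xm i th - U i th"
    using above_thK[OF i th] by (auto simp: premium_eq tlS_eq)
  show "0 \<le> premium i th"
    using above_thK[OF i th] by (auto simp: premium_eq)
  have "(U i th - K) / Xm i th \<le> hi - lo" if gt: "thK i < th"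
  proof -
    have "U i th - K \<le> (hi - lo) * Xm i th"
      using U_le[OF i th] K_nonneg th Xm_bounds(1)[OF i th] mult_right_mono[of "th - lo" "hi - lo" "Xm i th"]
      by auto
    then show ?thesis
      using above_thK(2)[OF i th gt] by (simp add: divide_le_eq)
  qed
  then show "premium i th \<le> hi - lo"
    using lo_less_hi by (auto simp: premium_eq)
qed

lemma premium_least:
  assumes i: "i \<in> {1,2}" and th: "th \<in> {lo..hi}" and a: "0 \<le> a" and UK: "U i th - K \<le> a * Xm i th"
  shows "premium i th \<le> a"
proof (cases "th \<le> thK i")
  case False
  then show ?thesis
    using UK above_thK(2)[OF i th] by (simp add: premium_eq divide_le_eq)
qed (simp add: premium_eq a)

text \<open>The row \<open>t\<^sub>i(\<theta>, \<cdot>)\<close> of the win-lose dependent transfer with premium \<open>a\<close> whose worst-case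
  utility is \<open>U i \<theta>\<close>.\<close>

definition premium_row :: "nat \<Rightarrow> real \<Rightarrow> real \<Rightarrow> real \<Rightarrow> real" where
  "premium_row i th a z =
     (th - a + (a * Xm i th - U i th)) * x i th z + (a * Xm i th - U i th) * (1 - x i th z)"

lemma ts_eq_premium_row: "i \<in> {1,2} \<Longrightarrow> th \<in> {lo..hi} \<Longrightarrow> ts i th z = premium_row i th (premium i th) z"
  using tlS_premium[of i th] by (simp add: t_star_def premium_row_def premium_def)

lemma integral_premium_row:
  assumes i: "i \<in> {1,2}" and th: "th \<in> {lo..hi}"
  shows "(\<integral>z. premium_row i th a z \<partial>P) = th * XP i th - U i th - a * (XP i th - Xm i th)"
proof -
  have "(\<integral>z. premium_row i th a z \<partial>P) = (\<integral>z. (a * Xm i th - U i th) + (th - a) * x i th z \<partial>P)"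
    by (simp add: premium_row_def algebra_simps)
  also have "\<dots> = (a * Xm i th - U i th) + (th - a) * XP i th"
    unfolding Xint_def by (rule integral_affine_x[OF P_in_Beliefs i th])
  finally show ?thesis
    by (simp add: algebra_simps)
qed

lemma Tint_ts:
  assumes i: "i \<in> {1,2}" and th: "th \<in> {lo..hi}"
  shows "Tint P ts i th = th * XP i th - U i th - premium i th * (XP i th - Xm i th)"
  using integral_premium_row[OF i th] ts_eq_premium_row[OF i th] by (simp add: Tint_def)

lemma premium_row_Tint_le:
  assumes i: "i \<in> {1,2}" and th: "th \<in> {lo..hi}" and a: "premium i th \<le> a"
  shows "(\<integral>z. premium_row i th a z \<partial>P) \<le> Tint P ts i th"
  using mult_right_mono[OF a, of "XP i th - Xm i th"] Xm_bounds(2)[OF i th]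
  by (simp add: integral_premium_row[OF i th] Tint_ts[OF i th])

lemma U_measurable: "i \<in> {1,2} \<Longrightarrow> U i \<in> borel_measurable \<Theta>"
  unfolding BTheta_def by (rule borel_measurable_continuous_on_restrict[OF U_continuous])

lemma Xm_measurable: "i \<in> {1,2} \<Longrightarrow> Xm i \<in> borel_measurable \<Theta>"
  unfolding BTheta_def by (rule borel_measurable_mono_on_fnc[OF Xm_mono])

lemma id_measurable_Theta: "(\<lambda>z::real. z) \<in> borel_measurable \<Theta>"
  unfolding BTheta_def by (rule measurable_restrict_space1) simp

lemma
  assumes i: "i \<in> {1,2}"
  shows premium_measurable: "premium i \<in> borel_measurable \<Theta>"
    and tlS_measurable: "tlS i \<in> borel_measurable \<Theta>"
proof -
  have below: "{th \<in> space \<Theta>. th \<le> thK i} \<in> sets \<Theta>"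
    by (rule borel_measurable_le[OF id_measurable_Theta borel_measurable_const])
  have "(\<lambda>th. if th \<le> thK i then 0 else (U i th - K) / Xm i th) \<in> borel_measurable \<Theta>"
    using below U_measurable[OF i] Xm_measurable[OF i] by (intro measurable_If) auto
  then show "premium i \<in> borel_measurable \<Theta>"
    by (simp add: premium_eq[abs_def])
  have "(\<lambda>th. if th \<le> thK i then - U i th else - K) \<in> borel_measurable \<Theta>"
    using below U_measurable[OF i] by (intro measurable_If) auto
  then show "tlS i \<in> borel_measurable \<Theta>"
    by (simp add: tlS_eq[abs_def])
qed

lemma ts_transfer_rule: "transfer_rule lo hi ts"
  unfolding transfer_rule_def bdd_meas2_def
proof (intro ballI conjI)
  fix i :: nat assume i: "i \<in> {1,2}"
  have ts_eq: "ts i a b = tlS i a + (a - premium i a) * x i a b" for a b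
    by (simp add: t_star_def premium_def algebra_simps)
  have x: "(\<lambda>(a,b). x i a b) \<in> borel_measurable (\<Theta> \<Otimes>\<^sub>M \<Theta>)"
    using x_allocation i unfolding allocation_rule_def bdd_meas2_def by blast
  have "(\<lambda>a. a - premium i a) \<in> borel_measurable \<Theta>"
    using id_measurable_Theta premium_measurable[OF i] by (rule borel_measurable_diff)
  from measurable_compose[OF measurable_fst this] measurable_compose[OF measurable_fst tlS_measurable[OF i]] x
  have "(\<lambda>z. tlS i (fst z) + (fst z - premium i (fst z)) * (\<lambda>(a,b). x i a b) z) \<in> borel_measurable (\<Theta> \<Otimes>\<^sub>M \<Theta>)"
    by (intro borel_measurable_add borel_measurable_times)
  then show "(\<lambda>(a,b). ts i a b) \<in> borel_measurable (\<Theta> \<Otimes>\<^sub>M \<Theta>)"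
    by (simp add: ts_eq case_prod_beta')
  show "\<exists>C. \<forall>a\<in>{lo..hi}. \<forall>b\<in>{lo..hi}. \<bar>ts i a b\<bar> \<le> C"
  proof (intro exI[of _ "K + (hi - lo) + hi"] ballI)
    fix a b assume a: "a \<in> {lo..hi}" and b: "b \<in> {lo..hi}"
    have "\<bar>tlS i a\<bar> \<le> K + (hi - lo)"
      using U_nonneg[OF i a] U_le_length[OF i a] K_nonneg lo_less_hi by (auto simp: tlS_eq)
    moreover have "\<bar>(a - premium i a) * x i a b\<bar> \<le> hi"
    proof -
      have "\<bar>a - premium i a\<bar> \<le> hi"
        using premium_nonneg[OF i a] premium_le[OF i a] a lo_pos by auto
      then show ?thesis
        using x_bounds[OF i a b] mult_mono[of "\<bar>a - premium i a\<bar>" hi "x i a b" 1] by (simp add: abs_mult)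
    qed
    ultimately show "\<bar>ts i a b\<bar> \<le> K + (hi - lo) + hi"
      unfolding ts_eq by linarith
  qed
qed

lemma ts_win_lose_dependent: "win_lose_dependent lo hi x ts"
  unfolding win_lose_dependent_def
proof (rule exI[of _ twS], rule exI[of _ tlS], intro ballI conjI)
  fix i th z assume i: "i \<in> {1,2::nat}" and th: "th \<in> {lo..hi}"
  show "ts i th z = twS i th * x i th z + tlS i th * (1 - x i th z)"
    by (simp add: t_star_def)
  show "- tlS i th \<le> th - twS i th"
    using premium_nonneg[OF i th] by (simp add: premium_def)
qed

lemma ts_K_limited: "K_limited lo hi x K ts"
  unfolding K_limited_def
proof (intro ballI impI allI)
  fix i th zw zl assume i: "i \<in> {1,2::nat}" and th: "th \<in> {lo..hi}"
    and "x i th zw = 1 \<and> x i th zl = 0"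
  then have "ts i th zl = tlS i th"
    by (simp add: t_star_def)
  then show "- ts i th zl \<le> K"
    using U_le_K[OF i th] by (simp add: tlS_eq)
qed

lemma ts_Um:
  assumes i: "i \<in> {1,2}" and th: "th \<in> {lo..hi}"
  shows "Um ts i th = U i th"
proof -
  have a: "th - twS i th + tlS i th = premium i th"
    by (simp add: premium_def)
  have "Um ts i th = - tlS i th + (th - twS i th + tlS i th) * Xm i th"
    unfolding Umin_def using premium_nonneg[OF i th] a
    by (intro Inf_win_lose_eq[OF i th]) (simp_all add: t_star_def)
  also have "\<dots> = U i th"
    unfolding a using tlS_premium[OF i th] by simp
  finally show ?thesis .
qed

lemma ts_V_le:
  assumes i: "i \<in> {1,2}" and th: "th \<in> {lo..hi}" and r: "r \<in> {lo..hi}"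
  shows "V ts i th r \<le> U i th"
proof -
  have "V ts i th r \<le> - tlS i r + (th - twS i r + tlS i r) * Xm i r"
    unfolding Vrep_def by (rule Inf_win_lose_le[OF i r]) (simp add: t_star_def)
  also have "\<dots> = U i r + (th - r) * Xm i r"
  proof -
    have "th - twS i r + tlS i r = premium i r + (th - r)"
      by (simp add: premium_def)
    then have "- tlS i r + (th - twS i r + tlS i r) * Xm i r = - tlS i r + (premium i r + (th - r)) * Xm i r"
      by (simp only:)
    also have "\<dots> = U i r + (th - r) * Xm i r"
      using tlS_premium[OF i r] by (simp add: algebra_simps)
    finally show ?thesis .
  qed
  also have "\<dots> \<le> U i th"
  proof (cases "r \<le> th")
    case True
    then show ?thesis
      using U_diff_ge[OF i, of r th] r th by simp
  next
    case False
    then show ?thesis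
      using U_diff_le[OF i, of th r] r th by (simp add: algebra_simps)
  qed
  finally show ?thesis .
qed

lemma ts_feasible: "feasible lo hi P D eta x ts"
  unfolding feasible_def incentive_compatible_def individually_rational_def
proof (intro conjI ballI)
  fix i th r assume i: "i \<in> {1,2::nat}" and th: "th \<in> {lo..hi}" and r: "r \<in> {lo..hi}"
  have "V ts i th th = Um ts i th"
    by (simp add: Vrep_def Umin_def)
  then show "V ts i th r \<le> V ts i th th"
    using ts_V_le[OF i th r] ts_Um[OF i th] by simp
next
  fix i th assume i: "i \<in> {1,2::nat}" and th: "th \<in> {lo..hi}"
  show "0 \<le> Um ts i th"
    using ts_Um[OF i th] U_nonneg[OF i th] by simp
qed

section \<open>Winning events and the envelope inequality\<close>

lemma singleton_null:
  assumes Q: "Q \<in> Beliefs" and th: "th \<in> {lo..hi}"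
  shows "{th} \<in> null_sets Q"
proof -
  have "{th} \<in> sets \<Theta>"
    using th unfolding BTheta_def by (subst sets_restrict_space_iff) auto
  then have "{th} \<in> null_sets P"
    using P_atomless sets_P by (auto simp: null_sets_def)
  then show ?thesis
    using Beliefs_ac[OF Q] unfolding absolutely_continuous_def by blast
qed

lemma AE_neq: "Q \<in> Beliefs \<Longrightarrow> th \<in> {lo..hi} \<Longrightarrow> AE z in Q. z \<noteq> th"
  by (rule AE_I'[OF singleton_null]) auto

definition wins :: "nat \<Rightarrow> real \<Rightarrow> real set" where
  "wins i th = {z \<in> {lo..hi}. x i th z = 1}"

lemma wins_sets: "i \<in> {1,2} \<Longrightarrow> th \<in> {lo..hi} \<Longrightarrow> wins i th \<in> sets \<Theta>"
  using borel_measurable_eq[OF x_measurable borel_measurable_const, of i th 1] by (simp add: wins_def)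

lemma x_eq_indicator_wins:
  "i \<in> {1,2} \<Longrightarrow> th \<in> {lo..hi} \<Longrightarrow> z \<in> {lo..hi} \<Longrightarrow> z \<noteq> th \<Longrightarrow> x i th z = indicator (wins i th) z"
  using x_binary[of i th z] by (auto simp: wins_def)

lemma integral_x_wins:
  assumes Q: "Q \<in> Beliefs" and i: "i \<in> {1,2}" and th: "th \<in> {lo..hi}"
  shows "(\<integral>z. x i th z \<partial>Q) = measure Q (wins i th)"
proof -
  have "(\<integral>z. x i th z \<partial>Q) = (\<integral>z. indicator (wins i th) z \<partial>Q)"
  proof (rule integral_cong_AE)
    show "x i th \<in> borel_measurable Q"
      using measurable_Theta_cong[OF x_measurable[OF i th] sets_Belief[OF Q]] .
    show "(\<lambda>z. indicator (wins i th) z :: real) \<in> borel_measurable Q"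
      using wins_sets[OF i th] sets_Belief[OF Q] by (intro borel_measurable_indicator) simp
    show "AE z in Q. x i th z = indicator (wins i th) z"
      using AE_neq[OF Q th] AE_space[of Q]
      by eventually_elim (auto simp: space_Belief[OF Q] intro: x_eq_indicator_wins[OF i th])
  qed
  also have "\<dots> = measure Q (wins i th)"
    using space_Belief[OF Q] by (simp add: wins_def Int_absorb2 subset_eq)
  finally show ?thesis .
qed

lemma XP_wins: "i \<in> {1,2} \<Longrightarrow> th \<in> {lo..hi} \<Longrightarrow> XP i th = measure P (wins i th)"
  using integral_x_wins[OF P_in_Beliefs] by (simp add: Xint_def)

lemma wins_nonempty:
  assumes "i \<in> {1,2}" "th \<in> {lo..hi}" "0 < XP i th"
  obtains z where "z \<in> {lo..hi}" "x i th z = 1"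
proof -
  have "wins i th \<noteq> {}"
    using XP_wins[OF assms(1,2)] assms(3) by auto
  then show ?thesis
    using that by (auto simp: wins_def)
qed

lemma loses_nonempty:
  assumes i: "i \<in> {1,2}" and th: "th \<in> {lo..hi}" and X: "XP i th < 1"
  obtains z where "z \<in> {lo..hi}" "x i th z = 0"
proof -
  have "\<not> {lo..hi} - {th} \<subseteq> wins i th"
  proof
    assume sub: "{lo..hi} - {th} \<subseteq> wins i th"
    have "{th} \<in> sets P" "measure P {th} = 0"
      using singleton_null[OF P_in_Beliefs th] by (auto simp: measure_def null_setsD1)
    then have "measure P ({lo..hi} - {th}) = 1"
      using P.prob_compl[of "{th}"] by simp
    moreover have "measure P ({lo..hi} - {th}) \<le> measure P (wins i th)"
      using wins_sets[OF i th] sets_P sub by (intro P.finite_measure_mono) auto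
    ultimately show False
      using X XP_wins[OF i th] by simp
  qed
  then obtain z where "z \<in> {lo..hi}" "z \<noteq> th" "x i th z \<noteq> 1"
    unfolding wins_def by blast
  then show ?thesis
    using x_binary[OF i th, of z] that by auto
qed

lemma integrable_transfer_row:
  assumes s: "transfer_rule lo hi s" and Q: "Q \<in> Beliefs" and i: "i \<in> {1,2}" and r: "r \<in> {lo..hi}"
  shows "integrable Q (s i r)"
proof -
  have bm: "bdd_meas2 lo hi s"
    using s by (simp add: transfer_rule_def)
  obtain C where "\<And>a b. a \<in> {lo..hi} \<Longrightarrow> b \<in> {lo..hi} \<Longrightarrow> \<bar>s i a b\<bar> \<le> C"
    using bdd_meas2_bounded[OF bm i] by blast
  then show ?thesis
    using Q r bdd_meas2_section_measurable[OF bm i r] by (intro integrable_Belief[where C = C]) auto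
qed

lemma integral_transfer_row_bounded:
  assumes s: "transfer_rule lo hi s" and i: "i \<in> {1,2}"
  obtains C where "\<And>Q r. Q \<in> Beliefs \<Longrightarrow> r \<in> {lo..hi} \<Longrightarrow> \<bar>\<integral>z. s i r z \<partial>Q\<bar> \<le> C"
proof -
  have bm: "bdd_meas2 lo hi s"
    using s by (simp add: transfer_rule_def)
  obtain C where C: "\<And>a b. a \<in> {lo..hi} \<Longrightarrow> b \<in> {lo..hi} \<Longrightarrow> \<bar>s i a b\<bar> \<le> C"
    using bdd_meas2_bounded[OF bm i] by blast
  have "\<bar>\<integral>z. s i r z \<partial>Q\<bar> \<le> C" if Q: "Q \<in> Beliefs" and r: "r \<in> {lo..hi}" for Q r
  proof -
    interpret Q: prob_space Q
      using Beliefs_prob[OF Q] .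
    have "\<bar>\<integral>z. s i r z \<partial>Q\<bar> \<le> (\<integral>z. \<bar>s i r z\<bar> \<partial>Q)"
      by (rule integral_abs_bound)
    also have "\<dots> \<le> (\<integral>z. C \<partial>Q)"
      using integrable_transfer_row[OF s Q i r] C[OF r] by (intro integral_mono) (auto simp: space_Belief[OF Q])
    finally show ?thesis
      by (simp add: Q.prob_space)
  qed
  then show ?thesis
    by (rule that)
qed

lemma integral_utility:
  assumes s: "transfer_rule lo hi s" and Q: "Q \<in> Beliefs" and i: "i \<in> {1,2}" and r: "r \<in> {lo..hi}"
  shows "(\<integral>z. c * x i r z - s i r z \<partial>Q) = c * (\<integral>z. x i r z \<partial>Q) - (\<integral>z. s i r z \<partial>Q)"
  using integrable_transfer_row[OF s Q i r] integrable_x[OF Q i r] by simp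

lemma Um_le_integral:
  assumes s: "transfer_rule lo hi s" and Q: "Q \<in> Beliefs" and i: "i \<in> {1,2}" and r: "r \<in> {lo..hi}"
  shows "Um s i r \<le> (\<integral>z. r * x i r z - s i r z \<partial>Q)"
proof -
  obtain C where C: "\<And>Q. Q \<in> Beliefs \<Longrightarrow> \<bar>\<integral>z. s i r z \<partial>Q\<bar> \<le> C"
    using integral_transfer_row_bounded[OF s i] r by metis
  have "- C \<le> (\<integral>z. r * x i r z - s i r z \<partial>Q')" if Q': "Q' \<in> Beliefs" for Q'
  proof -
    have "0 \<le> r * (\<integral>z. x i r z \<partial>Q')"
      using integral_x_bounds(1)[OF Q' i r] r lo_pos by simp
    then show ?thesis
      using C[OF Q'] integral_utility[OF s Q' i r] by (simp add: abs_le_iff)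
  qed
  then show ?thesis
    unfolding Umin_def using Q by (intro cInf_lower) (auto intro!: bdd_belowI2)
qed

lemma V_ge_misreport:
  assumes s: "transfer_rule lo hi s" and i: "i \<in> {1,2}" and r: "r \<in> {lo..hi}" and th: "th \<in> {lo..hi}"
    and "r \<le> th"
  shows "(th - r) * Xm i r + Um s i r \<le> V s i th r"
  unfolding Vrep_def
proof (rule cInf_greatest)
  show "(\<lambda>Q. \<integral>z. th * x i r z - s i r z \<partial>Q) ` Beliefs \<noteq> {}"
    using Beliefs_nonempty by simp
  fix y assume "y \<in> (\<lambda>Q. \<integral>z. th * x i r z - s i r z \<partial>Q) ` Beliefs"
  then obtain Q where Q: "Q \<in> Beliefs" and y: "y = (\<integral>z. th * x i r z - s i r z \<partial>Q)"
    by auto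
  have "y = (th - r) * (\<integral>z. x i r z \<partial>Q) + (\<integral>z. r * x i r z - s i r z \<partial>Q)"
    unfolding y integral_utility[OF s Q i r] by (simp add: algebra_simps)
  moreover have "(th - r) * Xm i r \<le> (th - r) * (\<integral>z. x i r z \<partial>Q)"
    using Xm_le_integral[OF Q i r] \<open>r \<le> th\<close> by (intro mult_left_mono) auto
  ultimately show "(th - r) * Xm i r + Um s i r \<le> y"
    using Um_le_integral[OF s Q i r] by simp
qed

lemma U_le_Um_if_feasible:
  assumes s: "transfer_rule lo hi s" and feasible: "feasible lo hi P D eta x s"
    and i: "i \<in> {1,2}" and th: "th \<in> {lo..hi}"
  shows "U i th \<le> Um s i th"
proof -
  have IC: "V s i t r \<le> Um s i t" if "t \<in> {lo..hi}" "r \<in> {lo..hi}" for t r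
    using feasible i that unfolding feasible_def incentive_compatible_def by (auto simp: Vrep_def Umin_def)
  have IR: "0 \<le> Um s i lo"
    using feasible i lo_less_hi unfolding feasible_def individually_rational_def by auto
  have "integral {lo..th} (Xm i) \<le> Um s i th - Um s i lo"
  proof (rule integral_le_diff_of_slope_bound)
    show "lo \<le> th" "mono_on {lo..th} (Xm i)"
      using th Xm_mono[OF i] by (auto intro: mono_on_subset)
    fix r t assume "lo \<le> r" "r \<le> t" "t \<le> th"
    then show "(t - r) * Xm i r \<le> Um s i t - Um s i r"
      using V_ge_misreport[OF s i, of r t] IC[of t r] th by auto
  qed
  then show ?thesis
    using IR by (simp add: U_def)
qed

section \<open>Admissible perturbations of beliefs\<close>

text \<open>The density with respect to \<open>P\<close> of the belief that gives \<open>W\<close> its \<open>Q\<close>-probability and is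
  proportional to \<open>P\<close> on \<open>W\<close> and on its complement.\<close>

definition coarsening :: "real set \<Rightarrow> real measure \<Rightarrow> real \<Rightarrow> real" where
  "coarsening W Q z = measure Q W / measure P W * indicator W z
     + (1 - measure Q W) / (1 - measure P W) * indicator ({lo..hi} - W) z"

lemma coarsening_measurable:
  assumes W: "W \<in> sets \<Theta>"
  shows "coarsening W Q \<in> borel_measurable P"
proof -
  have "{lo..hi} - W \<in> sets \<Theta>"
    using sets.compl_sets[OF W] by simp
  then show ?thesis
    unfolding coarsening_def using W sets_P
    by (intro borel_measurable_add borel_measurable_times borel_measurable_const borel_measurable_indicator) auto
qed

lemma coarsening_nonneg:
  assumes Q: "Q \<in> Beliefs"
  shows "0 \<le> coarsening W Q z"
proof -
  interpret Q: prob_space Q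
    using Beliefs_prob[OF Q] .
  show ?thesis
    by (simp add: coarsening_def)
qed

lemma emeasure_coarsening:
  assumes W: "W \<in> sets \<Theta>" "0 < measure P W" "measure P W < 1" and Q: "Q \<in> Beliefs"
    and A: "A \<in> {{}, W, {lo..hi} - W, {lo..hi}}"
  shows "emeasure (density P (coarsening W Q)) A = emeasure Q A"
proof -
  interpret Q: prob_space Q
    using Beliefs_prob[OF Q] .
  let ?Q' = "density P (coarsening W Q)" and ?L = "{lo..hi} - W"
  have L: "?L \<in> sets \<Theta>"
    using sets.compl_sets[OF W(1)] by simp
  have sets: "sets Q = sets \<Theta>" "sets P = sets \<Theta>"
    using sets_Belief[OF Q] sets_P by simp_all
  have cell: "emeasure ?Q' C = ennreal (c * measure P C)"
    if C: "C \<in> sets \<Theta>" and c: "0 \<le> c" "\<And>z. z \<in> C \<Longrightarrow> coarsening W Q z = c" for C c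
  proof -
    have "emeasure ?Q' C = (\<integral>\<^sup>+z. ennreal (coarsening W Q z) * indicator C z \<partial>P)"
      using coarsening_measurable[OF W(1)] C sets by (intro emeasure_density) auto
    also have "\<dots> = (\<integral>\<^sup>+z. ennreal c * indicator C z \<partial>P)"
      using c by (intro nn_integral_cong) (simp add: indicator_def)
    also have "\<dots> = ennreal (c * measure P C)"
      using C c sets by (simp add: nn_integral_cmult_indicator P.emeasure_eq_measure ennreal_mult)
    finally show ?thesis .
  qed
  have on_W: "emeasure ?Q' W = emeasure Q W"
    using cell[OF W(1), of "measure Q W / measure P W"] W by (simp add: coarsening_def Q.emeasure_eq_measure)
  have "measure P ?L = 1 - measure P W" "measure Q ?L = 1 - measure Q W"
    using P.prob_compl[of W] Q.prob_compl[of W] W(1) sets by (simp_all add: space_Belief[OF Q])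
  then have on_L: "emeasure ?Q' ?L = emeasure Q ?L"
    using cell[OF L, of "(1 - measure Q W) / (1 - measure P W)"] W
    by (simp add: coarsening_def Q.emeasure_eq_measure)
  have cells: "emeasure N {lo..hi} = emeasure N W + emeasure N ?L" if "sets N = sets \<Theta>" for N
  proof -
    have "W \<union> ?L = {lo..hi}"
      using sets.sets_into_space[OF W(1)] by auto
    then show ?thesis
      using plus_emeasure[of W N ?L] W(1) L that by auto
  qed
  have "emeasure ?Q' {lo..hi} = emeasure Q {lo..hi}"
    using cells[of ?Q'] cells[of Q] on_W on_L sets by simp
  then show ?thesis
    using A on_W on_L by auto
qed

text \<open>By (D5) the divergence of the coarsening equals that of its restriction to the
  \<open>\<sigma>\<close>-algebra generated by \<open>W\<close>, where it agrees with \<open>Q\<close>; by (D4) this is at most \<open>D(Q \<parallel> P)\<close>.\<close>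

lemma coarsening_in_Beliefs:
  assumes W: "W \<in> sets \<Theta>" "0 < measure P W" "measure P W < 1" and Q: "Q \<in> Beliefs"
  shows "density P (coarsening W Q) \<in> Beliefs"
proof -
  interpret Q: prob_space Q
    using Beliefs_prob[OF Q] .
  let ?Q' = "density P (coarsening W Q)"
  define E where "E = {{}, W, {lo..hi} - W, {lo..hi}}"
  have W_sub: "W \<subseteq> {lo..hi}"
    using sets.sets_into_space[OF W(1)] by simp
  have E_sets: "E \<subseteq> sets \<Theta>"
    using W(1) sets.compl_sets[OF W(1)] sets.top[of \<Theta>] by (auto simp: E_def)
  have E_sa: "sigma_algebra {lo..hi} E"
    unfolding E_def using W_sub by (rule sigma_algebra_two_cells)
  then have E: "is_salg lo hi E"
    using E_sets by (simp add: is_salg_def)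
  have Delta: "Delta lo hi (sets \<Theta>) ?Q'"
    using emeasure_coarsening[OF W Q, of "{lo..hi}"] Q.emeasure_space_1 sets_P
    by (auto simp: Delta_def space_Belief[OF Q] intro!: prob_spaceI)
  have restr_eq: "restr ?Q' E = restr Q E"
    unfolding restr_def using E_sa emeasure_coarsening[OF W Q] W_sub
    by (simp add: space_Belief[OF Q] E_def) (intro measure_of_eq, auto simp: sigma_algebra.sigma_sets_eq[OF E_sa, unfolded E_def])
  have ac: "absolutely_continuous P ?Q'"
    using coarsening_measurable[OF W(1)] by (intro absolutely_continuousI_density) simp
  have "AE z in P. RN_deriv (restr P E) (restr ?Q' E) z = RN_deriv P ?Q' z"
    using RN_deriv_restr_two_cells[OF P_prob, of W "measure Q W / measure P W" "(1 - measure Q W) / (1 - measure P W)"]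
      W sets_P by (simp add: E_def coarsening_def[abs_def])
  then have "D ?Q' P = D (restr ?Q' E) (restr P E)"
    using D_restr_eq[OF Delta E E_sets ac] by simp
  also have "\<dots> = D (restr Q E) (restr P E)"
    using restr_eq by simp
  also have "\<dots> \<le> D Q P"
    using Beliefs_Delta[OF Q] E E_sets by (rule D_restr_le)
  also have "\<dots> \<le> ennreal eta"
    using Beliefs_D_le[OF Q] .
  finally show ?thesis
    using Delta by (rule BeliefsI[rotated])
qed

lemma integral_coarsening:
  assumes W: "W \<in> sets \<Theta>" "0 < measure P W" "measure P W < 1" and Q: "Q \<in> Beliefs"
    and u: "integrable P u"
  shows "(\<integral>z. u z \<partial>density P (coarsening W Q))
    = measure Q W / measure P W * (\<integral>z. u z * indicator W z \<partial>P)
      + (1 - measure Q W) / (1 - measure P W) * (\<integral>z. u z * indicator ({lo..hi} - W) z \<partial>P)"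
proof -
  have L: "{lo..hi} - W \<in> sets P"
    using sets.compl_sets[OF W(1)] sets_P by simp
  have "(\<integral>z. u z \<partial>density P (coarsening W Q)) = (\<integral>z. coarsening W Q z * u z \<partial>P)"
    using coarsening_measurable[OF W(1)] coarsening_nonneg[OF Q] u by (subst integral_density) auto
  also have "\<dots> = (\<integral>z. measure Q W / measure P W * (u z * indicator W z)
      + (1 - measure Q W) / (1 - measure P W) * (u z * indicator ({lo..hi} - W) z) \<partial>P)"
    by (simp add: coarsening_def algebra_simps)
  also have "\<dots> = measure Q W / measure P W * (\<integral>z. u z * indicator W z \<partial>P)
      + (1 - measure Q W) / (1 - measure P W) * (\<integral>z. u z * indicator ({lo..hi} - W) z \<partial>P)"
    using u W(1) L sets_P by (simp add: integrable_real_mult_indicator)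
  finally show ?thesis .
qed

lemma Delta_density_mixture:
  fixes g :: "real \<Rightarrow> real"
  assumes g: "g \<in> borel_measurable \<Theta>" "\<And>z. 0 \<le> g z" "\<And>z. g z \<le> C" "(\<integral>z. g z \<partial>P) = 1"
    and e: "0 \<le> e" "e \<le> 1"
  shows "Delta lo hi (sets \<Theta>) (density P (\<lambda>z. e * g z + (1 - e)))"
proof -
  let ?k = "\<lambda>z. e * g z + (1 - e)"
  have int_g: "integrable P g"
    using g by (intro integrable_Belief[OF P_in_Beliefs, where C = C]) auto
  have "emeasure (density P ?k) (space P) = (\<integral>\<^sup>+z. ennreal (?k z) * indicator (space P) z \<partial>P)"
    using measurable_Theta_cong[OF g(1) sets_P] sets.top[of P] by (intro emeasure_density) auto
  also have "\<dots> = (\<integral>\<^sup>+z. ennreal (?k z) \<partial>P)"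
    by (intro nn_integral_cong) (simp add: indicator_def)
  also have "\<dots> = ennreal (\<integral>z. ?k z \<partial>P)"
    using int_g g(2) e by (intro nn_integral_eq_integral) auto
  also have "\<dots> = 1"
    using int_g g(4) P.prob_space by simp
  finally show ?thesis
    using sets_P by (auto simp: Delta_def intro!: prob_spaceI)
qed

text \<open>Continuity (D2) at \<open>\<epsilon> = 0\<close> of the divergence of \<open>\<epsilon> Q\<^sub>g + (1 - \<epsilon>) P\<close>, where \<open>D(P \<parallel> P) = 0 < \<eta>\<close>.\<close>

lemma small_mixture_in_Beliefs:
  fixes g :: "real \<Rightarrow> real"
  assumes g: "g \<in> borel_measurable \<Theta>" "\<And>z. 0 \<le> g z" "\<And>z. g z \<le> C" and g1: "(\<integral>z. g z \<partial>P) = 1"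
  obtains e where "0 < e" "e \<le> 1" "density P (\<lambda>z. e * g z + (1 - e)) \<in> Beliefs"
proof -
  have gP: "g \<in> borel_measurable P"
    using measurable_Theta_cong[OF g(1) sets_P] .
  note mix_Delta = Delta_density_mixture[OF g g1]
  let ?Qg = "density P (\<lambda>z. ennreal (g z))"
  have Qg: "Delta lo hi (sets \<Theta>) ?Qg"
    using mix_Delta[of 1] by simp
  have ac: "absolutely_continuous P ?Qg"
    using gP by (intro absolutely_continuousI_density) simp
  have "AE z in P. ennreal (g z) = RN_deriv P ?Qg z"
    using gP by (intro sigma_finite_measure.RN_deriv_unique[OF prob_space_imp_sigma_finite[OF P_prob]]) auto
  then have "AE z in P. RN_deriv P ?Qg z \<le> ennreal C"
    by eventually_elim (metis g(3) ennreal_leI)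
  then have cont: "continuous_on {0..1} (\<lambda>e. D (mix e ?Qg P) P)"
    using Qg ac by (rule D_mix_continuous[rotated 2])
  have "mix 0 ?Qg P = P"
    using mix_density[OF gP g(2), of 0] by (simp add: density_1)
  then have "((\<lambda>e. D (mix e ?Qg P) P) \<longlongrightarrow> 0) (at 0 within {0..1})"
    using cont D_self unfolding continuous_on_def by (metis atLeastAtMost_iff order.refl zero_le_one)
  then have "eventually (\<lambda>e. D (mix e ?Qg P) P < ennreal eta) (at 0 within {0..1})"
    using eta_pos by (intro order_tendstoD(2)) auto
  then obtain d where d: "0 < d"
    and small: "\<And>e. e \<in> {0..1} \<Longrightarrow> e \<noteq> 0 \<Longrightarrow> dist e 0 < d \<Longrightarrow> D (mix e ?Qg P) P < ennreal eta"
    unfolding eventually_at by blast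
  define e where "e = min (d / 2) 1"
  have e: "0 < e" "e \<le> 1"
    using d by (auto simp: e_def)
  have "D (mix e ?Qg P) P < ennreal eta"
    using d e by (intro small) (auto simp: e_def dist_real_def)
  then have "density P (\<lambda>z. e * g z + (1 - e)) \<in> Beliefs"
    using mix_density[OF gP g(2)] e mix_Delta[of e] by (intro BeliefsI) auto
  with e that show ?thesis
    by blast
qed

text \<open>Strict inequality comes from shifting a little weight of \<open>P\<close> onto the event that bidder
  \<open>i\<close> loses.\<close>

lemma Xm_less_XP:
  assumes i: "i \<in> {1,2}" and th: "th \<in> {lo..hi}" and X: "0 < XP i th" "XP i th < 1"
  shows "Xm i th < XP i th"
proof -
  define L where "L = {lo..hi} - wins i th"
  have L: "L \<in> sets \<Theta>"
    using sets.compl_sets[OF wins_sets[OF i th]] by (simp add: L_def)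
  have PL: "measure P L = 1 - XP i th"
    using P.prob_compl[of "wins i th"] wins_sets[OF i th] sets_P XP_wins[OF i th] by (simp add: L_def)
  define g where "g z = indicator L z / (1 - XP i th)" for z
  have g: "g \<in> borel_measurable \<Theta>" "\<And>z. 0 \<le> g z" "\<And>z. g z \<le> 1 / (1 - XP i th)"
    using L X unfolding g_def[abs_def] by (auto simp: indicator_def divide_le_cancel)
  have "L \<inter> {lo..hi} = L"
    by (auto simp: L_def)
  then have "(\<integral>z. g z \<partial>P) = 1"
    using L X PL sets_P by (simp add: g_def)
  then obtain e where e: "0 < e" "e \<le> 1" and M: "density P (\<lambda>z. e * g z + (1 - e)) \<in> Beliefs"
    using small_mixture_in_Beliefs[OF g] by blast
  have gx: "AE z in P. g z * x i th z = 0"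
    using AE_neq[OF P_in_Beliefs th] AE_space[of P]
    by eventually_elim (auto simp: g_def L_def x_eq_indicator_wins[OF i th] split: split_indicator)
  have "integrable P (\<lambda>z. g z * x i th z)"
  proof (rule integrable_Belief[OF P_in_Beliefs])
    show "(\<lambda>z. g z * x i th z) \<in> borel_measurable \<Theta>"
      using g(1) x_measurable[OF i th] by (rule borel_measurable_times)
    fix z assume "z \<in> {lo..hi}"
    then show "\<bar>g z * x i th z\<bar> \<le> 1 / (1 - XP i th)"
      using g(2,3)[of z] x_bounds[OF i th, of z] mult_mono[of "g z" "1 / (1 - XP i th)" "x i th z" 1] X
      by (simp add: abs_mult)
  qed
  then have "(\<integral>z. x i th z \<partial>density P (\<lambda>z. e * g z + (1 - e))) = (1 - e) * XP i th"
    using integral_density_mixture[OF measurable_Theta_cong[OF g(1) sets_P] g(2) _ e(2)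
        integrable_x[OF P_in_Beliefs i th]] e(1) integral_eq_zero_AE[OF gx]
    by (simp add: Xint_def)
  then have "Xm i th \<le> (1 - e) * XP i th"
    using Xm_le_integral[OF M i th] by simp
  also have "\<dots> < XP i th"
    using e X by (simp add: algebra_simps)
  finally show ?thesis .
qed

section \<open>Optimality and uniqueness\<close>

definition R_admissible :: "(nat \<Rightarrow> real \<Rightarrow> real \<Rightarrow> real) \<Rightarrow> bool" where
  "R_admissible s \<longleftrightarrow> transfer_rule lo hi s \<and> win_lose_dependent lo hi x s \<and>
     (\<forall>i\<in>{1,2::nat}. \<forall>th\<in>{lo..hi}. Um s i th = integral {lo..th} (Xm i)) \<and> K_limited lo hi x K s"

definition P_admissible :: "(nat \<Rightarrow> real \<Rightarrow> real \<Rightarrow> real) \<Rightarrow> bool" where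
  "P_admissible s \<longleftrightarrow> transfer_rule lo hi s \<and> feasible lo hi P D eta x s \<and> K_limited lo hi x K s"

lemma solves_R_iff:
  "solves_R lo hi P D eta x K t \<longleftrightarrow> R_admissible t \<and> (\<forall>s. R_admissible s \<longrightarrow> objective P s \<le> objective P t)"
  by (simp add: solves_R_def R_admissible_def)

lemma solves_P_iff:
  "solves_P lo hi P D eta x K t \<longleftrightarrow> P_admissible t \<and> (\<forall>s. P_admissible s \<longrightarrow> objective P s \<le> objective P t)"
  by (simp add: solves_P_def P_admissible_def)

lemma ts_R_admissible: "R_admissible ts"
  using ts_transfer_rule ts_win_lose_dependent ts_K_limited ts_Um by (simp add: R_admissible_def U_def)

lemma ts_P_admissible: "P_admissible ts"
  using ts_transfer_rule ts_feasible ts_K_limited by (simp add: P_admissible_def)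

lemma K_limited_loss_payment:
  assumes K_lim: "K_limited lo hi x K s" and i: "i \<in> {1,2}" and th: "th \<in> {lo..hi}" and th_hi: "th < hi"
    and X: "0 < XP i th" and z: "z \<in> {lo..hi}" "x i th z = 0"
  shows "- s i th z \<le> K"
proof -
  obtain zw where zw: "zw \<in> {lo..hi}" "x i th zw = 1"
    using wins_nonempty[OF i th X] by blast
  have "\<forall>th\<in>{lo..hi}. th < hi \<longrightarrow>
      (\<forall>thw\<in>{lo..hi}. \<forall>thl\<in>{lo..hi}. x i th thw = 1 \<and> x i th thl = 0 \<longrightarrow> - s i th thl \<le> K)"
    using K_lim i unfolding K_limited_def by (rule bspec)
  then have "\<forall>thw\<in>{lo..hi}. \<forall>thl\<in>{lo..hi}. x i th thw = 1 \<and> x i th thl = 0 \<longrightarrow> - s i th thl \<le> K"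
    using th th_hi by simp
  then show ?thesis
    using zw z by simp
qed

text \<open>The worst-case utility of a win-lose row is \<open>-t\<^sup>l + a X\<^sup>m\<^sup>i\<^sup>n\<close>, so the envelope condition
  forces \<open>t\<^sup>l = a X\<^sup>m\<^sup>i\<^sup>n - U\<close>.\<close>

lemma R_admissible_premium_row:
  assumes s: "R_admissible s" and i: "i \<in> {1,2}" and th: "th \<in> {lo..hi}"
  obtains a where "0 \<le> a" "\<And>z. z \<in> {lo..hi} \<Longrightarrow> s i th z = premium_row i th a z"
proof -
  have "win_lose_dependent lo hi x s"
    and Um_s: "\<forall>i\<in>{1,2::nat}. \<forall>th\<in>{lo..hi}. Um s i th = integral {lo..th} (Xm i)"
    using s by (simp_all add: R_admissible_def)
  then obtain tw tl where wl_all: "\<forall>i\<in>{1,2::nat}. \<forall>th\<in>{lo..hi}. \<forall>z\<in>{lo..hi}.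
      s i th z = tw i th * x i th z + tl i th * (1 - x i th z) \<and> th - tw i th \<ge> - tl i th"
    unfolding win_lose_dependent_def by blast
  have wl_th: "\<forall>z\<in>{lo..hi}.
      s i th z = tw i th * x i th z + tl i th * (1 - x i th z) \<and> th - tw i th \<ge> - tl i th"
    using bspec[OF bspec[OF wl_all i] th] .
  define a where "a = th - tw i th + tl i th"
  have row: "s i th z = tw i th * x i th z + tl i th * (1 - x i th z)" if "z \<in> {lo..hi}" for z
    using bspec[OF wl_th that] by simp
  have a_nonneg: "0 \<le> a"
    using bspec[OF wl_th th] by (simp add: a_def)
  have "Um s i th = - tl i th + a * Xm i th"
    unfolding Umin_def a_def using a_nonneg by (intro Inf_win_lose_eq[OF i th row]) (simp_all add: a_def)
  moreover have "Um s i th = U i th"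
    using bspec[OF bspec[OF Um_s i] th] by (simp add: U_def)
  ultimately have l: "tl i th = a * Xm i th - U i th"
    by simp
  have "tw i th = th - a + tl i th"
    by (simp add: a_def)
  then have "s i th z = premium_row i th a z" if "z \<in> {lo..hi}" for z
    using row[OF that] l by (simp add: premium_row_def)
  with a_nonneg that show ?thesis
    by blast
qed

text \<open>On losses a premium row pays \<open>t\<^sup>l = a X\<^sup>m\<^sup>i\<^sup>n - U\<close>, so K-limitation bounds \<open>a\<close> from below.\<close>

lemma K_limited_premium_row:
  assumes K_lim: "K_limited lo hi x K s" and i: "i \<in> {1,2}" and th: "th \<in> {lo..hi}" and th_hi: "th < hi"
    and a: "0 \<le> a" and row: "\<And>z. z \<in> {lo..hi} \<Longrightarrow> s i th z = premium_row i th a z"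
  shows "premium i th \<le> a"
proof (rule premium_least[OF i th a])
  show "U i th - K \<le> a * Xm i th"
  proof (cases "th \<le> thK i")
    case True
    then show ?thesis
      using U_le_K[OF i th True] mult_nonneg_nonneg[OF a Xm_bounds(1)[OF i th]] by linarith
  next
    case False
    then have "0 < XP i th"
      using above_thK(2)[OF i th] Xm_bounds(2)[OF i th] by simp
    obtain zl where zl: "zl \<in> {lo..hi}" "x i th zl = 0"
      using loses_nonempty[OF i th XP_less_1[OF i th th_hi]] by blast
    have "- s i th zl \<le> K"
      by (rule K_limited_loss_payment[OF K_lim i th th_hi \<open>0 < XP i th\<close> zl])
    then show ?thesis
      using row[OF zl(1)] zl(2) by (simp add: premium_row_def)
  qed
qed

lemma R_admissible_row:
  assumes s: "R_admissible s" and i: "i \<in> {1,2}" and th: "th \<in> {lo..hi}" and th_hi: "th < hi"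
  obtains a where "premium i th \<le> a" "\<And>z. z \<in> {lo..hi} \<Longrightarrow> s i th z = premium_row i th a z"
proof -
  obtain a where a: "0 \<le> a" and row: "\<And>z. z \<in> {lo..hi} \<Longrightarrow> s i th z = premium_row i th a z"
    using R_admissible_premium_row[OF s i th] by blast
  have "K_limited lo hi x K s"
    using s by (simp add: R_admissible_def)
  from K_limited_premium_row[OF this i th th_hi a row] row that show ?thesis
    by blast
qed

lemma R_admissible_Tint_le:
  assumes s: "R_admissible s" and i: "i \<in> {1,2}" and th: "th \<in> {lo..hi}" and th_hi: "th < hi"
  shows "Tint P s i th \<le> Tint P ts i th"
proof -
  obtain a where a: "premium i th \<le> a" and row: "\<And>z. z \<in> {lo..hi} \<Longrightarrow> s i th z = premium_row i th a z"
    using R_admissible_row[OF s i th th_hi] by blast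
  have "Tint P s i th = (\<integral>z. premium_row i th a z \<partial>P)"
    unfolding Tint_def using row by (intro Bochner_Integration.integral_cong) auto
  with premium_row_Tint_le[OF i th a] show ?thesis
    by simp
qed

text \<open>When \<open>X\<close> vanishes the row does not depend on the premium; otherwise
  \<open>X\<^sup>m\<^sup>i\<^sup>n < X\<close> makes the expected transfer strictly decreasing in it.\<close>

lemma premium_row_AE_eq_ts:
  assumes i: "i \<in> {1,2}" and th: "th \<in> {lo..hi}" and th_hi: "th < hi" and a: "premium i th \<le> a"
    and eq: "(\<integral>z. premium_row i th a z \<partial>P) = Tint P ts i th"
  shows "AE z in P. premium_row i th a z = ts i th z"
proof (cases "XP i th = 0")
  case True
  then have Xm0: "Xm i th = 0"
    using Xm_bounds[OF i th] by simp
  have "wins i th \<in> null_sets P"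
    using True XP_wins[OF i th] wins_sets[OF i th] sets_P by (simp add: P.emeasure_eq_measure null_sets_def)
  then have "AE z in P. z \<notin> wins i th"
    by (rule AE_not_in)
  with AE_neq[OF P_in_Beliefs th] AE_space[of P] show ?thesis
    by eventually_elim
      (simp add: ts_eq_premium_row[OF i th] premium_row_def Xm0 x_eq_indicator_wins[OF i th])
next
  case False
  then have "Xm i th < XP i th"
    using Xm_less_XP[OF i th _ XP_less_1[OF i th th_hi]] Xm_bounds[OF i th] by simp
  moreover have "(a - premium i th) * (XP i th - Xm i th) = 0"
    using eq integral_premium_row[OF i th] Tint_ts[OF i th] by (simp add: algebra_simps)
  ultimately have "a = premium i th"
    by simp
  then show ?thesis
    by (simp add: ts_eq_premium_row[OF i th])
qed

lemma integral_losses_le: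
  assumes s: "transfer_rule lo hi s" "K_limited lo hi x K s"
    and i: "i \<in> {1,2}" and th: "th \<in> {lo..hi}" and th_hi: "th < hi" and X: "0 < XP i th"
  shows "(\<integral>z. (th * x i th z - s i th z) * indicator ({lo..hi} - wins i th) z \<partial>P) \<le> K * (1 - XP i th)"
proof -
  let ?u = "\<lambda>z. th * x i th z - s i th z" and ?L = "{lo..hi} - wins i th"
  have L: "?L \<in> sets P"
    using sets.compl_sets[OF wins_sets[OF i th]] sets_P by simp
  have u: "integrable P ?u"
    using integrable_transfer_row[OF s(1) P_in_Beliefs i th] integrable_x[OF P_in_Beliefs i th] by simp
  have "AE z in P. ?u z * indicator ?L z \<le> K * indicator ?L z"
    using AE_neq[OF P_in_Beliefs th] AE_space[of P]
  proof eventually_elim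
    case (elim z)
    show ?case
    proof (cases "z \<in> wins i th")
      case False
      then have x0: "x i th z = 0"
        using elim x_eq_indicator_wins[OF i th, of z] by simp
      have "z \<in> {lo..hi}"
        using elim by simp
      then show ?thesis
        using False x0 K_limited_loss_payment[OF s(2) i th th_hi X _ x0] by simp
    qed simp
  qed
  then have "(\<integral>z. ?u z * indicator ?L z \<partial>P) \<le> (\<integral>z. K * indicator ?L z \<partial>P)"
    using integrable_real_mult_indicator[OF L u] integrable_real_mult_indicator[OF L P.integrable_const]
    by (rule integral_mono_AE[rotated 2])
  also have "\<dots> = K * measure P ?L"
    using L by (simp add: Int_absorb2[OF Diff_subset])
  also have "measure P ?L = 1 - XP i th"
    using P.prob_compl[of "wins i th"] wins_sets[OF i th] sets_P XP_wins[OF i th] by simp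
  finally show ?thesis .
qed

text \<open>Coarsening beliefs to the partition into wins and losses replaces the utility of a K-limited
  transfer by its \<open>P\<close>-averages \<open>u\<^sub>W\<close> on wins and \<open>u\<^sub>L \<le> K\<close> on losses.\<close>

lemma win_lose_averages:
  assumes s: "transfer_rule lo hi s" "K_limited lo hi x K s"
    and i: "i \<in> {1,2}" and th: "th \<in> {lo..hi}" and th_hi: "th < hi" and X: "0 < XP i th"
  obtains uL uW where "uL \<le> K"
    and "(\<integral>z. th * x i th z - s i th z \<partial>P) = uL + (uW - uL) * XP i th"
    and "\<And>Q. Q \<in> Beliefs \<Longrightarrow>
      \<exists>Q'\<in>Beliefs. (\<integral>z. th * x i th z - s i th z \<partial>Q') = uL + (uW - uL) * (\<integral>z. x i th z \<partial>Q)"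
proof -
  define u where "u z = th * x i th z - s i th z" for z
  define W where "W = wins i th"
  define L where "L = {lo..hi} - W"
  have X1: "XP i th < 1"
    by (rule XP_less_1[OF i th th_hi])
  have W: "W \<in> sets \<Theta>" "0 < measure P W" "measure P W < 1"
    using wins_sets[OF i th] XP_wins[OF i th] X X1 by (simp_all add: W_def)
  have u: "integrable P u"
    using integrable_transfer_row[OF s(1) P_in_Beliefs i th] integrable_x[OF P_in_Beliefs i th]
    by (simp add: u_def[abs_def])
  define uW where "uW = (\<integral>z. u z * indicator W z \<partial>P) / XP i th"
  define uL where "uL = (\<integral>z. u z * indicator L z \<partial>P) / (1 - XP i th)"
  have on_W: "(\<integral>z. u z * indicator W z \<partial>P) = uW * XP i th"
    using X by (simp add: uW_def)
  have on_L: "(\<integral>z. u z * indicator L z \<partial>P) = uL * (1 - XP i th)"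
    using X1 by (simp add: uL_def)
  have u_P: "(\<integral>z. u z \<partial>P) = uL + (uW - uL) * XP i th"
    using integral_two_cells[OF u, of W] W(1) sets_P on_W on_L by (simp add: L_def algebra_simps)
  have "(\<integral>z. u z * indicator L z \<partial>P) \<le> K * (1 - XP i th)"
    using integral_losses_le[OF s i th th_hi X] by (simp add: u_def L_def W_def)
  then have uL: "uL \<le> K"
    using X1 by (simp add: on_L)
  have "\<exists>Q'\<in>Beliefs. (\<integral>z. u z \<partial>Q') = uL + (uW - uL) * (\<integral>z. x i th z \<partial>Q)" if Q: "Q \<in> Beliefs" for Q
  proof
    show "density P (coarsening W Q) \<in> Beliefs"
      by (rule coarsening_in_Beliefs[OF W Q])
    have "measure Q W / XP i th * (uW * XP i th) = measure Q W * uW"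
      using X by simp
    moreover have "(1 - measure Q W) / (1 - XP i th) * (uL * (1 - XP i th)) = (1 - measure Q W) * uL"
      using X1 by simp
    ultimately show "(\<integral>z. u z \<partial>density P (coarsening W Q)) = uL + (uW - uL) * (\<integral>z. x i th z \<partial>Q)"
      unfolding integral_coarsening[OF W Q u, folded L_def] integral_x_wins[OF Q i th, folded W_def]
        on_W on_L XP_wins[OF i th, folded W_def, symmetric]
      by (simp add: algebra_simps)
  qed
  with uL u_P that show ?thesis
    unfolding u_def by blast
qed

lemma P_admissible_Tint_le:
  assumes s: "P_admissible s" and i: "i \<in> {1,2}" and th: "th \<in> {lo..hi}" and th_hi: "th < hi"
  shows "Tint P s i th \<le> Tint P ts i th"
proof -
  have s_rule: "transfer_rule lo hi s" and feasible: "feasible lo hi P D eta x s"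
    and K_lim: "K_limited lo hi x K s"
    using s by (simp_all add: P_admissible_def)
  have Tint_s: "Tint P s i th = th * XP i th - (\<integral>z. th * x i th z - s i th z \<partial>P)"
    using integral_utility[OF s_rule P_in_Beliefs i th] by (simp add: Tint_def Xint_def)
  have U_le: "U i th \<le> (\<integral>z. th * x i th z - s i th z \<partial>Q)" if "Q \<in> Beliefs" for Q
    using U_le_Um_if_feasible[OF s_rule feasible i th] Um_le_integral[OF s_rule that i th] by (rule order_trans)
  show ?thesis
  proof (cases "th \<le> thK i")
    case True
    then show ?thesis
      using U_le[OF P_in_Beliefs] Tint_s Tint_ts[OF i th] by (simp add: premium_eq)
  next
    case False
    then have UK: "K < U i th" and Xm_pos: "0 < Xm i th"
      using above_thK[OF i th] by auto
    then have X_pos: "0 < XP i th"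
      using Xm_bounds(2)[OF i th] by simp
    then obtain uL uW where uL: "uL \<le> K"
      and u_P: "(\<integral>z. th * x i th z - s i th z \<partial>P) = uL + (uW - uL) * XP i th"
      and coarse: "\<And>Q. Q \<in> Beliefs \<Longrightarrow>
        \<exists>Q'\<in>Beliefs. (\<integral>z. th * x i th z - s i th z \<partial>Q') = uL + (uW - uL) * (\<integral>z. x i th z \<partial>Q)"
      using win_lose_averages[OF s_rule K_lim i th th_hi] by blast
    define b where "b = uW - uL"
    have lower: "U i th - uL \<le> b * (\<integral>z. x i th z \<partial>Q)" if Q: "Q \<in> Beliefs" for Q
    proof -
      obtain Q' where Q': "Q' \<in> Beliefs" "(\<integral>z. th * x i th z - s i th z \<partial>Q') = uL + b * (\<integral>z. x i th z \<partial>Q)"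
        using coarse[OF Q] by (auto simp: b_def)
      then show ?thesis
        using U_le[OF Q'(1)] by simp
    qed
    have "0 < b * XP i th"
      using lower[OF P_in_Beliefs] uL UK by (simp add: Xint_def)
    then have b: "0 \<le> b"
      using X_pos by (simp add: zero_less_mult_iff)
    have bXm: "U i th - uL \<le> b * Xm i th"
      using i th b lower by (rule le_Xm_if_le_all_Beliefs)
    then have "premium i th \<le> b"
      using uL by (intro premium_least[OF i th b]) simp
    then have "premium i th * (XP i th - Xm i th) \<le> b * (XP i th - Xm i th)"
      using Xm_bounds(2)[OF i th] by (intro mult_right_mono) auto
    then have "U i th + premium i th * (XP i th - Xm i th) \<le> uL + b * XP i th"
      using bXm by (simp add: right_diff_distrib)
    then show ?thesis
      using Tint_s u_P Tint_ts[OF i th] by (simp add: b_def)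
  qed
qed

lemma AE_below_hi: "AE th in P. th \<in> {lo..hi} \<and> th < hi"
proof -
  have "hi \<in> {lo..hi}"
    using lo_less_hi by simp
  from AE_neq[OF P_in_Beliefs this] AE_space[of P] show ?thesis
    by eventually_elim auto
qed

lemma transfer_rule_measurable_pair:
  assumes s: "transfer_rule lo hi s" and i: "i \<in> {1,2}"
  shows "(\<lambda>(a, b). s i a b) \<in> borel_measurable (P \<Otimes>\<^sub>M P)"
proof -
  have "(\<lambda>(a, b). s i a b) \<in> borel_measurable (\<Theta> \<Otimes>\<^sub>M \<Theta>)"
    using bspec[OF s[unfolded transfer_rule_def bdd_meas2_def] i] by (rule conjunct1)
  then show ?thesis
    unfolding measurable_cong_sets[OF sets_pair_measure_cong[OF sets_P sets_P] refl] .
qed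

lemma Tint_integrable:
  assumes s: "transfer_rule lo hi s" and i: "i \<in> {1,2}"
  shows "integrable P (Tint P s i)"
proof -
  obtain C where C: "\<And>Q r. Q \<in> Beliefs \<Longrightarrow> r \<in> {lo..hi} \<Longrightarrow> \<bar>\<integral>z. s i r z \<partial>Q\<bar> \<le> C"
    using integral_transfer_row_bounded[OF s i] by metis
  show ?thesis
  proof (rule P.integrable_const_bound[where B = C])
    show "Tint P s i \<in> borel_measurable P"
      unfolding Tint_def[abs_def] using transfer_rule_measurable_pair[OF s i]
      by (rule sigma_finite_measure.borel_measurable_lebesgue_integral[OF prob_space_imp_sigma_finite[OF P_prob]])
    show "AE r in P. norm (Tint P s i r) \<le> C"
      using C[OF P_in_Beliefs] by (intro AE_I2) (simp add: Tint_def)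
  qed
qed

lemma integral_Tint_mono:
  assumes s: "transfer_rule lo hi s" and t: "transfer_rule lo hi t" and i: "i \<in> {1,2}"
    and row: "\<And>th. th \<in> {lo..hi} \<Longrightarrow> th < hi \<Longrightarrow> Tint P s i th \<le> Tint P t i th"
  shows "(\<integral>th. Tint P s i th \<partial>P) \<le> (\<integral>th. Tint P t i th \<partial>P)"
  using Tint_integrable[OF s i] Tint_integrable[OF t i]
proof (rule integral_mono_AE)
  from AE_below_hi show "AE th in P. Tint P s i th \<le> Tint P t i th"
    by eventually_elim (auto intro: row)
qed

lemma objective_mono:
  assumes s: "transfer_rule lo hi s" and t: "transfer_rule lo hi t"
    and row: "\<And>i th. i \<in> {1,2} \<Longrightarrow> th \<in> {lo..hi} \<Longrightarrow> th < hi \<Longrightarrow> Tint P s i th \<le> Tint P t i th"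
  shows "objective P s \<le> objective P t"
proof -
  have "(\<integral>th. Tint P s i th \<partial>P) \<le> (\<integral>th. Tint P t i th \<partial>P)" if i: "i \<in> {1,2}" for i
    using integral_Tint_mono[OF s t i row[OF i]] .
  from this[of 1] this[of 2] show ?thesis
    by (simp add: objective_def)
qed

lemma R_admissible_objective_le:
  assumes "R_admissible s"
  shows "objective P s \<le> objective P ts"
proof (rule objective_mono[OF _ ts_transfer_rule])
  show "transfer_rule lo hi s"
    using assms by (simp add: R_admissible_def)
qed (rule R_admissible_Tint_le[OF assms])

lemma P_admissible_objective_le:
  assumes "P_admissible s"
  shows "objective P s \<le> objective P ts"
proof (rule objective_mono[OF _ ts_transfer_rule])
  show "transfer_rule lo hi s"
    using assms by (simp add: P_admissible_def)
qed (rule P_admissible_Tint_le[OF assms])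

lemma R_optimal_AE_eq_ts:
  assumes s: "R_admissible s" and opt: "objective P ts \<le> objective P s" and i: "i \<in> {1,2}"
  shows "AE z in P \<Otimes>\<^sub>M P. s i (fst z) (snd z) = ts i (fst z) (snd z)"
proof -
  have s_rule: "transfer_rule lo hi s"
    using s by (simp add: R_admissible_def)
  have AE_le: "AE th in P. Tint P s j th \<le> Tint P ts j th" if j: "j \<in> {1,2}" for j
    using AE_below_hi by eventually_elim (auto intro: R_admissible_Tint_le[OF s j])
  have le: "(\<integral>th. Tint P s j th \<partial>P) \<le> (\<integral>th. Tint P ts j th \<partial>P)" if j: "j \<in> {1,2}" for j
    using Tint_integrable[OF s_rule j] Tint_integrable[OF ts_transfer_rule j] AE_le[OF j]
    by (rule integral_mono_AE)
  have "(\<integral>th. Tint P s i th \<partial>P) = (\<integral>th. Tint P ts i th \<partial>P)"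
    using le[of 1] le[of 2] opt i by (auto simp: objective_def)
  with Tint_integrable[OF s_rule i] Tint_integrable[OF ts_transfer_rule i] AE_le[OF i]
  have "AE th in P. Tint P s i th = Tint P ts i th"
    by (rule AE_eq_if_integral_eq_AE_le)
  then have rows: "AE th in P. AE z in P. s i th z = ts i th z"
    using AE_below_hi
  proof eventually_elim
    case (elim th)
    then have th: "th \<in> {lo..hi}" "th < hi"
      by auto
    obtain a where a: "premium i th \<le> a" and row: "\<And>z. z \<in> {lo..hi} \<Longrightarrow> s i th z = premium_row i th a z"
      using R_admissible_row[OF s i th] by blast
    have "Tint P s i th = (\<integral>z. premium_row i th a z \<partial>P)"
      unfolding Tint_def using row by (intro Bochner_Integration.integral_cong) auto
    with elim have "(\<integral>z. premium_row i th a z \<partial>P) = Tint P ts i th"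
      by simp
    from premium_row_AE_eq_ts[OF i th a this] AE_space[of P] show ?case
      by eventually_elim (simp add: row)
  qed
  interpret PP: pair_sigma_finite P P
    by (simp add: pair_sigma_finite_def prob_space_imp_sigma_finite[OF P_prob])
  show ?thesis
  proof (rule PP.AE_pair_measure)
    show "{z \<in> space (P \<Otimes>\<^sub>M P). s i (fst z) (snd z) = ts i (fst z) (snd z)} \<in> sets (P \<Otimes>\<^sub>M P)"
      using transfer_rule_measurable_pair[OF s_rule i] transfer_rule_measurable_pair[OF ts_transfer_rule i]
      by (intro borel_measurable_eq) (simp_all add: case_prod_beta')
    show "AE th in P. AE z in P. s i (fst (th, z)) (snd (th, z)) = ts i (fst (th, z)) (snd (th, z))"
      using rows by simp
  qed
qed

end

theorem proposition3:
  fixes lo hi eta K :: real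
    and P :: "real measure"
    and D :: "real measure \<Rightarrow> real measure \<Rightarrow> ennreal"
    and x :: "nat \<Rightarrow> real \<Rightarrow> real \<Rightarrow> real"
  assumes "0 < lo" and "lo < hi"
    and "Delta lo hi (sets (BTheta lo hi)) P"
    and "\<forall>th. emeasure P {th} = 0"
    and "eta > 0"
    and "assumption_D lo hi D"
    and "allocation_rule lo hi x"
    and "assumption_X lo hi P D eta x"
    and "K \<ge> 0"
  shows "solves_R lo hi P D eta x K (t_star lo hi P D eta x K)
    \<and> (\<forall>t. solves_R lo hi P D eta x K t \<longrightarrow>
          (\<forall>i\<in>{1,2::nat}. AE z in P \<Otimes>\<^sub>M P. t i (fst z) (snd z) = t_star lo hi P D eta x K i (fst z) (snd z)))
    \<and> solves_P lo hi P D eta x K (t_star lo hi P D eta x K)"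
proof -
  interpret transfer_problem lo hi P D eta x K
    using assms by unfold_locales
  have "solves_R lo hi P D eta x K ts"
    using ts_R_admissible R_admissible_objective_le unfolding solves_R_iff by blast
  moreover have "AE z in P \<Otimes>\<^sub>M P. t i (fst z) (snd z) = ts i (fst z) (snd z)"
    if "solves_R lo hi P D eta x K t" "i \<in> {1,2}" for t i
    using that R_optimal_AE_eq_ts[OF _ _ that(2)] ts_R_admissible unfolding solves_R_iff by blast
  moreover have "solves_P lo hi P D eta x K ts"
    using ts_P_admissible P_admissible_objective_le unfolding solves_P_iff by blast
  ultimately show ?thesis
    by blast
qed

end
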